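(* For every $p\ge3$, $\check\beta_p<\tilde\beta_p$, and the set $\mathscr C_p^+$ of points $(\beta,h)\in[0,\infty)\times\mathbb R$ for which $H_{\beta,h,p}$ has exactly two global maximizers is described as follows. (1) If $p\ge4$ is even, there is a continuous function $\varphi_p:(\check\beta_p,\infty)\to[0,\infty)$, strictly decreasing on $(\check\beta_p,\tilde\beta_p)$ and vanishing on $[\tilde\beta_p,\infty)$, such that $\mathscr C_p^+=\{(\beta,\pm\varphi_p(\beta)):\beta\in(\check\beta_p,\infty)\setminus\{\tilde\beta_p\}\}$. (2) If $p\ge3$ is odd, there is a strictly decreasing continuous function $\varphi_p:(\check\beta_p,\infty)\to\mathbb R$ with $\varphi_p(\tilde\beta_p)=0$ and $\lim_{\beta\to\infty}\varphi_p(\beta)=-\infty$ such that $\mathscr C_p^+=\{(\beta,\varphi_p(\beta)):\beta\in(\check\beta_p,\infty)\}$. In both cases $\lim_{\beta\to\check\beta_p^+}\varphi_p(\beta)=\tanh^{-1}(m_* )-p\check\beta_pm_*^{p-1}$ with $m_*=\sqrt{(p-2)/p}$.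
   Context: $I(x)=\frac12[(1+x)\log(1+x)+(1-x)\log(1-x)]$, $H_{\beta,h,p}(x)=\beta x^p+hx-I(x)$ on $[-1,1]$; global maximizers are points attaining $\sup_{[-1,1]}H_{\beta,h,p}$. $\tilde\beta_p=\sup\{\beta\ge0:\sup_{x\in[-1,1]}H_{\beta,0,p}(x)=0\}$ and $\check\beta_p=\frac{1}{2(p-1)}\big(\frac{p}{p-2}\big)^{(p-2)/2}$. *)

theory Defs
  imports "HOL-Analysis.Analysis"
begin

text \<open>Entropy function; at x = 1 or x = -1 the term 0 * ln 0 is 0 (convention 0 log 0 = 0).\<close>
definition Ient :: "real \<Rightarrow> real" where
  "Ient x = (1/2) * ((1 + x) * ln (1 + x) + (1 - x) * ln (1 - x))"

definition Hfun :: "real \<Rightarrow> real \<Rightarrow> nat \<Rightarrow> real \<Rightarrow> real" where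
  "Hfun \<beta> h p x = \<beta> * x ^ p + h * x - Ient x"

definition global_maximizers :: "real \<Rightarrow> real \<Rightarrow> nat \<Rightarrow> real set" where
  "global_maximizers \<beta> h p =
     {x \<in> {-1..1}. \<forall>y \<in> {-1..1}. Hfun \<beta> h p y \<le> Hfun \<beta> h p x}"

definition beta_tilde :: "nat \<Rightarrow> real" where
  "beta_tilde p = Sup {\<beta>. \<beta> \<ge> 0 \<and> Sup (Hfun \<beta> 0 p ` {-1..1}) = 0}"

definition beta_check :: "nat \<Rightarrow> real" where
  "beta_check p = 1 / (2 * (real p - 1)) * (real p / (real p - 2)) powr ((real p - 2) / 2)"

definition Cplus :: "nat \<Rightarrow> (real \<times> real) set" where
  "Cplus p = {(\<beta>, h). \<beta> \<ge> 0 \<and> card (global_maximizers \<beta> h p) = 2}"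

end

theory Submission
  imports Defs "HOL-Real_Asymp.Real_Asymp"
begin

text \<open>
  The second derivative of \<open>H = H\<^sub>\<beta>\<^sub>,\<^sub>h\<^sub>,\<^sub>p\<close> has the sign of \<open>p(p-1)\<beta>\<kappa>(x) - 1\<close>, where
  \<open>\<kappa>(x) = x\<^sup>p\<^sup>-\<^sup>2(1 - x\<^sup>2)\<close> increases up to \<open>m\<^sub>* = \<surd>((p-2)/p)\<close> and decreases after it, and
  \<^term>\<open>beta_check p\<close> is the \<open>\<beta>\<close> with \<open>p(p-1)\<beta>\<kappa>(m\<^sub>*) = 1\<close>. Maximizers are critical points, so
  no two of them lie in an interval on which \<open>H'\<close> strictly decreases. Hence up to
  \<^term>\<open>beta_check p\<close> the maximizer is unique, and beyond it each of the wells \<open>[0, m\<^sub>*]\<close> and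
  \<open>[m\<^sub>*, 1]\<close> contains at most one maximizer (for odd \<open>p\<close> the left well extends to \<open>-1\<close>; for even
  \<open>p\<close> negative \<open>x\<close> are handled by the symmetry \<open>(x, h) \<mapsto> (-x, -h)\<close>). So there are two
  maximizers exactly when the difference \<open>\<Delta>(\<beta>, h)\<close> of the two well maxima vanishes. \<open>\<Delta>\<close> is
  Lipschitz, nondecreasing in \<open>h\<close> and strictly monotone through its zeros, and increasing \<open>\<beta>\<close>
  favours the right well; so the zero \<open>h = \<phi>\<^sub>p(\<beta>)\<close> is continuous and strictly decreasing. At
  \<^term>\<open>beta_check p\<close> it tends to the field making \<open>m\<^sub>*\<close> a degenerate critical point, and on the
  line \<open>h = 0\<close> it is reached exactly at \<^term>\<open>beta_tilde p\<close>, beyond which \<open>0\<close> is no longer a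
  maximizer.
\<close>

section \<open>The entropy function\<close>

lemma continuous_on_xlnx: "continuous_on {0..} (\<lambda>t::real. t * ln t)"
proof (rule continuous_on_eq_continuous_within[THEN iffD2], intro ballI)
  fix x :: real assume x: "x \<in> {0..}"
  show "continuous (at x within {0..}) (\<lambda>t. t * ln t)"
  proof (cases "x = 0")
    case True
    have "((\<lambda>t::real. t * ln t) \<longlongrightarrow> 0) (at_right 0)" by real_asymp
    then show ?thesis using True by (simp add: at_within_Ici_at_right continuous_within)
  next
    case False
    then have "isCont (\<lambda>t. t * ln t) x" using x by (intro continuous_intros) auto
    then show ?thesis by (rule continuous_at_imp_continuous_within)
  qed
qed

lemma continuous_on_Ient: "continuous_on {-1..1} Ient"
proof -
  define f where "f t = t * ln t" for t :: real
  have Ient_eq: "Ient = (\<lambda>x. (1/2) * (f (1 + x) + f (1 - x)))"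
    by (simp add: Ient_def f_def fun_eq_iff)
  have "continuous_on {-1..1} (\<lambda>x. f (1 + x))" "continuous_on {-1..1} (\<lambda>x. f (1 - x))"
    unfolding f_def
    by (rule continuous_on_compose2[OF continuous_on_xlnx]; auto intro!: continuous_intros)+
  then show ?thesis unfolding Ient_eq by (intro continuous_intros)
qed

lemma Ient_has_real_derivative:
  assumes "\<bar>x\<bar> < 1"
  shows "(Ient has_real_derivative artanh x) (at x)"
proof -
  have pos: "1 + x > 0" "1 - x > 0" using assms by auto
  have "(Ient has_real_derivative
          (1/2) * ((ln (1 + x) + (1 + x) * (1 / (1 + x))) + (- ln (1 - x) + (1 - x) * (-1 / (1 - x))))) (at x)"
    unfolding Ient_def[abs_def] using pos by (auto intro!: derivative_eq_intros)
  also have "(1/2) * ((ln (1 + x) + (1 + x) * (1 / (1 + x))) + (- ln (1 - x) + (1 - x) * (-1 / (1 - x))))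
      = artanh x"
    using pos by (simp add: artanh_def ln_div)
  finally show ?thesis .
qed

lemma Ient_minus: "Ient (-x) = Ient x"
  by (simp add: Ient_def algebra_simps)

lemma Ient_0: "Ient 0 = 0"
  by (simp add: Ient_def)

lemma Ient_1: "Ient 1 = ln 2"
  by (simp add: Ient_def)

lemma xlnx_ge: "0 \<le> t \<Longrightarrow> t - 1 \<le> t * ln (t::real)"
proof (cases "t = 0")
  case False
  assume "0 \<le> t"
  with False have t: "t > 0" by simp
  have "ln (1/t) \<le> 1/t - 1" using t by (intro ln_le_minus_one) auto
  then have "t * (- ln t) \<le> t * (1/t - 1)" using t by (intro mult_left_mono) (auto simp: ln_div)
  then show ?thesis using t by (simp add: algebra_simps)
qed simp

lemma Ient_nonneg: "x \<in> {-1..1} \<Longrightarrow> 0 \<le> Ient x"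
  using xlnx_ge[of "1 + x"] xlnx_ge[of "1 - x"] by (auto simp: Ient_def)

lemma artanh_ge_self: "0 \<le> t \<Longrightarrow> t < 1 \<Longrightarrow> t \<le> artanh (t::real)"
proof -
  assume t: "0 \<le> t" "t < 1"
  have "(\<lambda>s. artanh s - s) 0 \<le> (\<lambda>s. artanh s - s) t"
  proof (rule DERIV_nonneg_imp_increasing_open[OF t(1)])
    fix s :: real assume s: "0 < s" "s < t"
    then have "s^2 < 1" using t by (simp add: abs_square_less_1)
    then have "0 \<le> 1 / (1 - s^2) - 1" by (simp add: field_simps)
    moreover have "((\<lambda>s. artanh s - s) has_real_derivative (1 / (1 - s^2) - 1)) (at s)"
      using s t by (auto intro!: derivative_eq_intros)
    ultimately show "\<exists>y. ((\<lambda>s. artanh s - s) has_real_derivative y) (at s) \<and> 0 \<le> y" by blast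
  qed (use t in \<open>auto intro!: continuous_intros\<close>)
  then show ?thesis by simp
qed

lemma Ient_ge_half_square:
  assumes "\<bar>x\<bar> < 1"
  shows "x^2 / 2 \<le> Ient x"
proof -
  have "t^2 / 2 \<le> Ient t" if t: "0 \<le> t" "t < 1" for t
  proof -
    have "(\<lambda>s. Ient s - s^2/2) 0 \<le> (\<lambda>s. Ient s - s^2/2) t"
    proof (rule DERIV_nonneg_imp_increasing_open[OF t(1)])
      fix s :: real assume s: "0 < s" "s < t"
      then have "((\<lambda>s. Ient s - s^2/2) has_real_derivative (artanh s - s)) (at s)"
        using t by (auto intro!: derivative_eq_intros Ient_has_real_derivative)
      moreover have "0 \<le> artanh s - s" using artanh_ge_self[of s] s t by auto
      ultimately show "\<exists>y. ((\<lambda>s. Ient s - s^2/2) has_real_derivative y) (at s) \<and> 0 \<le> y" by blast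
    next
      show "continuous_on {0..t} (\<lambda>s. Ient s - s^2/2)"
        using continuous_on_subset[OF continuous_on_Ient] t by (auto intro!: continuous_intros)
    qed
    then show ?thesis by (simp add: Ient_0)
  qed
  from this[of x] this[of "-x"] assms show ?thesis by (cases "0 \<le> x") (auto simp: Ient_minus)
qed

section \<open>The free energy functional and its global maximizers\<close>

lemma Hfun_has_real_derivative:
  assumes "\<bar>y\<bar> < 1"
  shows "(Hfun \<beta> h p has_real_derivative (real p * \<beta> * y^(p-1) + h - artanh y)) (at y)"
proof -
  have "((\<lambda>x. \<beta> * x^p + h * x - Ient x) has_real_derivative
          (\<beta> * (of_nat p * y^(p-1)) + h * 1 - artanh y)) (at y)"
    by (auto intro!: derivative_eq_intros Ient_has_real_derivative[OF assms])
  then show ?thesis unfolding Hfun_def[abs_def] by (simp add: algebra_simps)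
qed

lemma continuous_on_Hfun: "continuous_on {-1..1} (Hfun \<beta> h p)"
  unfolding Hfun_def[abs_def] by (intro continuous_intros continuous_on_Ient)

lemma Hfun_0: "p \<noteq> 0 \<Longrightarrow> Hfun \<beta> h p 0 = 0"
  by (simp add: Hfun_def Ient_0)

lemma Hfun_minus: "Hfun \<beta> h p (-x) = Hfun ((-1)^p * \<beta>) (-h) p x"
  by (simp add: Hfun_def Ient_minus power_minus[of x p])

lemma Hfun_shift: "Hfun \<beta>' h' p x = Hfun \<beta> h p x + (\<beta>' - \<beta>) * x^p + (h' - h) * x"
  by (simp add: Hfun_def algebra_simps)

lemma Hfun_le_shift:
  assumes "x \<in> {-1..1}"
  shows "Hfun \<beta> h p x \<le> Hfun \<beta>' h' p x + \<bar>\<beta> - \<beta>'\<bar> + \<bar>h - h'\<bar>"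
proof -
  have x: "\<bar>x\<bar> \<le> 1" "\<bar>x^p\<bar> \<le> 1" using assms by (auto simp: power_abs power_le_one)
  have "Hfun \<beta> h p x - Hfun \<beta>' h' p x = (\<beta> - \<beta>') * x^p + (h - h') * x"
    by (simp add: Hfun_shift[of \<beta> h p x \<beta>' h'])
  also have "\<dots> \<le> \<bar>\<beta> - \<beta>'\<bar> * \<bar>x^p\<bar> + \<bar>h - h'\<bar> * \<bar>x\<bar>"
    by (intro add_mono) (auto simp: abs_mult[symmetric])
  also have "\<dots> \<le> \<bar>\<beta> - \<beta>'\<bar> + \<bar>h - h'\<bar>"
    using x by (intro add_mono mult_left_le) auto
  finally show ?thesis by simp
qed

definition Hsup :: "real \<Rightarrow> real \<Rightarrow> nat \<Rightarrow> real set \<Rightarrow> real" where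
  "Hsup \<beta> h p K = Sup (Hfun \<beta> h p ` K)"

lemma Hsup_attained:
  assumes "compact K" "K \<noteq> {}" "K \<subseteq> {-1..1}"
  shows "\<exists>x\<in>K. Hfun \<beta> h p x = Hsup \<beta> h p K \<and> (\<forall>y\<in>K. Hfun \<beta> h p y \<le> Hsup \<beta> h p K)"
proof -
  obtain x where x: "x \<in> K" "\<forall>y\<in>K. Hfun \<beta> h p y \<le> Hfun \<beta> h p x"
    using continuous_attains_sup[OF assms(1,2) continuous_on_subset[OF continuous_on_Hfun assms(3)]]
    by blast
  have "Hsup \<beta> h p K = Hfun \<beta> h p x"
    unfolding Hsup_def by (rule cSup_eq_maximum) (use x in auto)
  then show ?thesis using x by auto
qed

lemma Hfun_le_Hsup: "compact K \<Longrightarrow> K \<subseteq> {-1..1} \<Longrightarrow> x \<in> K \<Longrightarrow> Hfun \<beta> h p x \<le> Hsup \<beta> h p K"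
  using Hsup_attained[of K \<beta> h p] by blast

lemma abs_Hsup_diff_le:
  assumes K: "compact K" "K \<noteq> {}" "K \<subseteq> {-1..1}"
  shows "\<bar>Hsup \<beta> h p K - Hsup \<beta>' h' p K\<bar> \<le> \<bar>\<beta> - \<beta>'\<bar> + \<bar>h - h'\<bar>"
proof -
  have le: "Hsup \<beta> h p K \<le> Hsup \<beta>' h' p K + \<bar>\<beta> - \<beta>'\<bar> + \<bar>h - h'\<bar>" for \<beta> h \<beta>' h'
  proof -
    obtain x where x: "x \<in> K" "Hfun \<beta> h p x = Hsup \<beta> h p K" using Hsup_attained[OF K] by blast
    then show ?thesis
      using Hfun_le_shift[of x \<beta> h p \<beta>' h'] Hfun_le_Hsup[OF K(1,3) x(1), of \<beta>' h' p] K(3) by auto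
  qed
  from le[of \<beta> h \<beta>' h'] le[of \<beta>' h' \<beta> h] show ?thesis by (simp add: abs_minus_commute)
qed

lemma global_maximizers_iff:
  "x \<in> global_maximizers \<beta> h p \<longleftrightarrow> x \<in> {-1..1} \<and> Hfun \<beta> h p x = Hsup \<beta> h p {-1..1}"
proof
  assume "x \<in> global_maximizers \<beta> h p"
  then have x: "x \<in> {-1..1}" "\<forall>y\<in>{-1..1}. Hfun \<beta> h p y \<le> Hfun \<beta> h p x"
    by (auto simp: global_maximizers_def)
  have "Hsup \<beta> h p {-1..1} = Hfun \<beta> h p x"
    unfolding Hsup_def by (rule cSup_eq_maximum) (use x in auto)
  with x show "x \<in> {-1..1} \<and> Hfun \<beta> h p x = Hsup \<beta> h p {-1..1}" by simp
next
  assume "x \<in> {-1..1} \<and> Hfun \<beta> h p x = Hsup \<beta> h p {-1..1}"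
  then show "x \<in> global_maximizers \<beta> h p"
    using Hfun_le_Hsup[of "{-1..1}"] by (auto simp: global_maximizers_def)
qed

lemma global_maximizers_nonempty: "global_maximizers \<beta> h p \<noteq> {}"
  using Hsup_attained[of "{-1..1}" \<beta> h p] by (auto simp: global_maximizers_iff)

lemma Hfun_right_end: "\<exists>y. -1 < y \<and> y < 1 \<and> Hfun \<beta> h p 1 < Hfun \<beta> h p y"
proof -
  define C where "C = real p * \<bar>\<beta>\<bar> + \<bar>h\<bar>"
  define e where "e = exp (-(2*C + 2))"
  have "0 \<le> C" by (simp add: C_def)
  then have e: "0 < e" "e < 1" by (auto simp: e_def)
  define y where "y = 1 - e/2"
  have y: "-1 < y" "y < 1" using e by (auto simp: y_def)
  have "Hfun \<beta> h p 1 < Hfun \<beta> h p y"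
  proof (rule DERIV_neg_imp_decreasing_open[OF \<open>y < 1\<close>])
    fix z assume z: "y < z" "z < 1"
    have z0: "0 < z" using z e by (auto simp: y_def)
    have "ln (1 - z) < ln e" using z e by (intro ln_less_cancel_iff[THEN iffD2]) (auto simp: y_def)
    moreover have "0 \<le> ln (1 + z)" using z0 by simp
    moreover have "artanh z = (ln (1 + z) - ln (1 - z)) / 2" using z z0 by (simp add: artanh_def ln_div)
    ultimately have "C + 1 < artanh z" by (simp add: e_def)
    moreover have "\<bar>z ^ (p - 1)\<bar> \<le> 1" using z z0 by (simp add: power_abs power_le_one)
    then have "\<bar>real p * \<beta> * z ^ (p - 1)\<bar> \<le> real p * \<bar>\<beta>\<bar>"
      by (simp add: abs_mult mult_left_le)
    then have "real p * \<beta> * z ^ (p - 1) + h \<le> C" unfolding C_def by linarith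
    ultimately show "\<exists>d. (Hfun \<beta> h p has_real_derivative d) (at z) \<and> d < 0"
      using Hfun_has_real_derivative[of z] z z0 by (intro exI conjI) auto
  qed (use y in \<open>auto intro: continuous_on_subset[OF continuous_on_Hfun]\<close>)
  with y show ?thesis by blast
qed

lemma global_maximizer_interior:
  assumes "x \<in> global_maximizers \<beta> h p"
  shows "-1 < x \<and> x < 1"
proof -
  have x: "x \<in> {-1..1}" and max: "\<And>y. y \<in> {-1..1} \<Longrightarrow> Hfun \<beta> h p y \<le> Hfun \<beta> h p x"
    using assms by (auto simp: global_maximizers_def)
  have "x \<noteq> 1"
  proof
    assume "x = 1"
    obtain y where "-1 < y" "y < 1" "Hfun \<beta> h p 1 < Hfun \<beta> h p y"
      using Hfun_right_end by blast
    with max[of y] \<open>x = 1\<close> show False by simp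
  qed
  moreover have "x \<noteq> -1"
  proof
    assume "x = -1"
    obtain y where "-1 < y" "y < 1" "Hfun ((-1)^p * \<beta>) (-h) p 1 < Hfun ((-1)^p * \<beta>) (-h) p y"
      using Hfun_right_end by blast
    then have "Hfun \<beta> h p (-1) < Hfun \<beta> h p (-y)" by (simp add: Hfun_minus)
    with max[of "-y"] \<open>x = -1\<close> \<open>-1 < y\<close> \<open>y < 1\<close> show False by simp
  qed
  ultimately show ?thesis using x by auto
qed

lemma global_maximizer_critical:
  assumes "x \<in> global_maximizers \<beta> h p"
  shows "real p * \<beta> * x^(p-1) + h - artanh x = 0"
proof -
  have x: "-1 < x" "x < 1" using global_maximizer_interior[OF assms] by auto
  show ?thesis
  proof (rule DERIV_local_max[OF Hfun_has_real_derivative])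
    show "\<bar>x\<bar> < 1" "0 < min (1 - x) (x + 1)" using x by auto
    show "\<forall>y. \<bar>x - y\<bar> < min (1 - x) (x + 1) \<longrightarrow> Hfun \<beta> h p y \<le> Hfun \<beta> h p x"
      using assms by (auto simp: global_maximizers_def abs_less_iff)
  qed
qed

section \<open>Local analysis for a fixed exponent\<close>

locale pspin =
  fixes p :: nat
  assumes p_ge_3: "3 \<le> p"
begin

abbreviation H where "H \<beta> h \<equiv> Hfun \<beta> h p"
abbreviation GM where "GM \<beta> h \<equiv> global_maximizers \<beta> h p"
abbreviation Hmax where "Hmax \<beta> h \<equiv> Hsup \<beta> h p {-1..1}"
abbreviation bcheck where "bcheck \<equiv> beta_check p"
abbreviation btilde where "btilde \<equiv> beta_tilde p"

definition dH :: "real \<Rightarrow> real \<Rightarrow> real \<Rightarrow> real" where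
  "dH \<beta> h y = real p * \<beta> * y^(p-1) + h - artanh y"

definition d2H :: "real \<Rightarrow> real \<Rightarrow> real" where
  "d2H \<beta> y = real p * (real p - 1) * \<beta> * y^(p-2) - 1 / (1 - y^2)"

definition kappa :: "real \<Rightarrow> real" where
  "kappa y = y^(p-2) * (1 - y^2)"

definition m_star :: real where
  "m_star = sqrt ((real p - 2) / real p)"

lemma H_has_real_derivative: "\<bar>y\<bar> < 1 \<Longrightarrow> (H \<beta> h has_real_derivative dH \<beta> h y) (at y)"
  unfolding dH_def by (rule Hfun_has_real_derivative)

lemma dH_has_real_derivative:
  assumes "\<bar>y\<bar> < 1"
  shows "(dH \<beta> h has_real_derivative d2H \<beta> y) (at y)"
proof -
  have "((\<lambda>y. real p * \<beta> * y^(p-1) + h - artanh y) has_real_derivative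
          (real p * \<beta> * (of_nat (p-1) * y^(p-1-1)) + 0 - 1 / (1 - y^2))) (at y)"
    by (auto intro!: derivative_eq_intros artanh_real_has_field_derivative assms)
  moreover have "real p * \<beta> * (of_nat (p-1) * y^(p-1-1)) + 0 - 1 / (1 - y^2) = d2H \<beta> y"
    using p_ge_3 by (simp add: d2H_def of_nat_diff numeral_2_eq_2)
  ultimately show ?thesis unfolding dH_def[abs_def] by simp
qed

lemma dH_strict_decreasing:
  assumes "-1 < a" "a < b" "b < 1" "\<And>z. a < z \<Longrightarrow> z < b \<Longrightarrow> d2H \<beta> z < 0"
  shows "dH \<beta> h b < dH \<beta> h a"
proof (rule DERIV_neg_imp_decreasing_open[OF assms(2)])
  show "continuous_on {a..b} (dH \<beta> h)"
    using assms by (intro continuous_at_imp_continuous_on ballI DERIV_isCont[OF dH_has_real_derivative]) auto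
next
  fix x assume "a < x" "x < b"
  with assms show "\<exists>y. (dH \<beta> h has_real_derivative y) (at x) \<and> y < 0"
    by (intro exI[of _ "d2H \<beta> x"] conjI dH_has_real_derivative) auto
qed

lemma H_strict_increasing:
  assumes "-1 \<le> a" "a < b" "b \<le> 1" "\<And>z. a < z \<Longrightarrow> z < b \<Longrightarrow> 0 < dH \<beta> h z"
  shows "H \<beta> h a < H \<beta> h b"
proof (rule DERIV_pos_imp_increasing_open[OF assms(2)])
  show "continuous_on {a..b} (H \<beta> h)"
    using assms by (intro continuous_on_subset[OF continuous_on_Hfun]) auto
next
  fix x assume "a < x" "x < b"
  with assms show "\<exists>y. (H \<beta> h has_real_derivative y) (at x) \<and> 0 < y"
    by (intro exI[of _ "dH \<beta> h x"] conjI H_has_real_derivative) auto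
qed

lemma H_strict_decreasing:
  assumes "-1 \<le> a" "a < b" "b \<le> 1" "\<And>z. a < z \<Longrightarrow> z < b \<Longrightarrow> dH \<beta> h z < 0"
  shows "H \<beta> h b < H \<beta> h a"
proof (rule DERIV_neg_imp_decreasing_open[OF assms(2)])
  show "continuous_on {a..b} (H \<beta> h)"
    using assms by (intro continuous_on_subset[OF continuous_on_Hfun]) auto
next
  fix x assume "a < x" "x < b"
  with assms show "\<exists>y. (H \<beta> h has_real_derivative y) (at x) \<and> y < 0"
    by (intro exI[of _ "dH \<beta> h x"] conjI H_has_real_derivative) auto
qed

lemma d2H_eq_kappa:
  assumes "\<bar>y\<bar> < 1"
  shows "d2H \<beta> y = (real p * (real p - 1) * \<beta> * kappa y - 1) / (1 - y^2)"
proof -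
  have "1 - y^2 > 0" using assms by (simp add: abs_square_less_1)
  then show ?thesis by (simp add: d2H_def kappa_def field_simps)
qed

lemma d2H_neg_iff: "\<bar>y\<bar> < 1 \<Longrightarrow> d2H \<beta> y < 0 \<longleftrightarrow> real p * (real p - 1) * \<beta> * kappa y < 1"
  using abs_square_less_1[of y] by (auto simp: d2H_eq_kappa divide_less_0_iff)

lemma d2H_pos_iff: "\<bar>y\<bar> < 1 \<Longrightarrow> 0 < d2H \<beta> y \<longleftrightarrow> 1 < real p * (real p - 1) * \<beta> * kappa y"
  using abs_square_less_1[of y] by (auto simp: d2H_eq_kappa zero_less_divide_iff)

lemma m_star_pos: "0 < m_star" and m_star_less_1: "m_star < 1"
  using p_ge_3 by (auto simp: m_star_def real_sqrt_less_iff)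

lemma m_star_square: "m_star^2 = (real p - 2) / real p"
  using p_ge_3 by (simp add: m_star_def)

lemma kappa_has_real_derivative:
  "(kappa has_real_derivative (y^(p-3) * ((real p - 2) - real p * y^2))) (at y)"
proof -
  obtain k where k: "p = k + 3" using p_ge_3 by (metis le_add_diff_inverse2)
  have pow: "y^p = y^(p-2) * y^2" "y^(p-2) = y^(p-3) * y" "y^(p-1) = y^(p-3) * y^2" for y :: real
    unfolding k by (simp_all add: power_add power2_eq_square power3_eq_cube flip: power_Suc2)
  have kappa_eq: "kappa = (\<lambda>y. y^(p-2) - y^p)"
    by (rule ext) (simp add: kappa_def pow(1) right_diff_distrib)
  have "((\<lambda>y. y^(p-2) - y^p) has_real_derivative
          (of_nat (p-2) * y^(p-2-1) - of_nat p * y^(p-1))) (at y)"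
    by (auto intro!: derivative_eq_intros)
  also have "of_nat (p-2) * y^(p-2-1) - of_nat p * y^(p-1) = y^(p-3) * ((real p - 2) - real p * y^2)"
    unfolding pow(3) diff_diff_left using p_ge_3 by (simp add: of_nat_diff algebra_simps numeral_eq_Suc)
  finally show ?thesis unfolding kappa_eq .
qed

lemma kappa_strict_mono:
  assumes "0 \<le> a" "a < b" "b \<le> m_star"
  shows "kappa a < kappa b"
proof (rule DERIV_pos_imp_increasing_open[OF assms(2)])
  fix x assume x: "a < x" "x < b"
  have "x^2 < m_star^2" using x assms by (intro power_strict_mono) auto
  then have "0 < (real p - 2) - real p * x^2" using p_ge_3 by (simp add: m_star_square field_simps)
  moreover have "0 < x^(p-3)" using x assms by simp
  ultimately show "\<exists>y. (kappa has_real_derivative y) (at x) \<and> 0 < y"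
    using kappa_has_real_derivative by (intro exI[of _ "x^(p-3) * ((real p - 2) - real p * x^2)"]) auto
qed (auto simp: kappa_def intro!: continuous_intros)

lemma kappa_strict_antimono:
  assumes "m_star \<le> a" "a < b"
  shows "kappa b < kappa a"
proof (rule DERIV_neg_imp_decreasing_open[OF assms(2)])
  fix x assume x: "a < x" "x < b"
  have "m_star^2 < x^2" using x assms m_star_pos by (intro power_strict_mono) auto
  then have "(real p - 2) - real p * x^2 < 0" using p_ge_3 by (simp add: m_star_square field_simps)
  moreover have "0 < x^(p-3)" using x assms m_star_pos by simp
  ultimately show "\<exists>y. (kappa has_real_derivative y) (at x) \<and> y < 0"
    using kappa_has_real_derivative
    by (intro exI[of _ "x^(p-3) * ((real p - 2) - real p * x^2)"]) (auto simp: mult_pos_neg)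
qed (auto simp: kappa_def intro!: continuous_intros)

lemma kappa_less_kappa_m_star: "0 < z \<Longrightarrow> z \<noteq> m_star \<Longrightarrow> kappa z < kappa m_star"
  using kappa_strict_mono[of z m_star] kappa_strict_antimono[of m_star z] by (cases "z < m_star") auto

lemma kappa_m_star_pos: "0 < kappa m_star"
  using m_star_pos m_star_less_1 by (simp add: kappa_def power_less_one_iff)

lemma bcheck_kappa_m_star: "real p * (real p - 1) * bcheck * kappa m_star = 1"
proof -
  define q where "q = real p"
  have q: "3 \<le> q" using p_ge_3 by (simp add: q_def)
  define r where "r = (q - 2) / q"
  have r: "0 < r" using q by (simp add: r_def)
  have "m_star^(p-2) = (r powr (1/2)) ^ (p-2)"
    using r by (simp add: m_star_def r_def q_def powr_half_sqrt)
  also have "\<dots> = r powr ((q - 2) / 2)"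
    using r p_ge_3 by (simp add: powr_realpow[symmetric] powr_powr q_def of_nat_diff)
  finally have pow: "m_star^(p-2) = r powr ((q - 2) / 2)" .
  have "(q / (q - 2)) powr ((q - 2) / 2) * r powr ((q - 2) / 2) = (q / (q - 2) * r) powr ((q - 2) / 2)"
    using r q powr_mult[of "q / (q - 2)" r "(q - 2) / 2"] by simp
  also have "q / (q - 2) * r = 1" using q by (simp add: r_def field_simps)
  finally have pr: "(q / (q - 2)) powr ((q - 2) / 2) * r powr ((q - 2) / 2) = 1" by simp
  have sq: "1 - m_star^2 = 2 / q" using q by (simp add: m_star_square q_def[symmetric] field_simps)
  have "real p * (real p - 1) * bcheck * kappa m_star
      = (q * (q - 1) * (1 / (2 * (q - 1))) * (2 / q)) * ((q / (q - 2)) powr ((q - 2) / 2) * r powr ((q - 2) / 2))"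
    unfolding kappa_def pow sq beta_check_def q_def[symmetric] by simp
  also have "\<dots> = 1" using q pr by (simp add: field_simps)
  finally show ?thesis .
qed

lemma bcheck_pos: "0 < bcheck"
  using p_ge_3 by (simp add: beta_check_def)

lemma global_maximizer_d2H_nonpos:
  assumes x: "x \<in> GM \<beta> h"
  shows "d2H \<beta> x \<le> 0"
proof (rule ccontr)
  assume "\<not> d2H \<beta> x \<le> 0"
  have xi: "-1 < x" "x < 1" using global_maximizer_interior[OF x] by auto
  have crit: "dH \<beta> h x = 0" using global_maximizer_critical[OF x] by (simp add: dH_def)
  obtain d where d: "0 < d" "\<And>t. 0 < t \<Longrightarrow> t < d \<Longrightarrow> dH \<beta> h x < dH \<beta> h (x + t)"
    using DERIV_pos_inc_right[OF dH_has_real_derivative, of x \<beta> h] xi \<open>\<not> d2H \<beta> x \<le> 0\<close> by force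
  define e where "e = min d (1 - x) / 2"
  have e: "0 < e" "e < d" "x + e < 1" using d(1) xi by (auto simp: e_def min_def field_simps)
  have "H \<beta> h x < H \<beta> h (x + e)"
    using xi e crit d(2)[of "_ - x"] by (intro H_strict_increasing) force+
  moreover have "H \<beta> h (x + e) \<le> H \<beta> h x"
    using x xi e by (auto simp: global_maximizers_def)
  ultimately show False by simp
qed

lemma global_maximizer_kappa_le:
  "x \<in> GM \<beta> h \<Longrightarrow> 0 < x \<Longrightarrow> real p * (real p - 1) * \<beta> * kappa x \<le> 1"
  using global_maximizer_d2H_nonpos[of x \<beta> h] d2H_pos_iff[of x \<beta>] global_maximizer_interior[of x \<beta> h]
  by force

text \<open>Maximizers are compared on \<open>[left_end, 1]\<close>. For odd \<open>p\<close>, \<^term>\<open>d2H\<close> is negative on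
  \<open>(-1, 0]\<close>, so all of \<open>[-1, 1]\<close> is controlled; for even \<open>p\<close> the negative axis is handled by the
  symmetry \<open>x \<mapsto> -x\<close>.\<close>
definition left_end :: real where
  "left_end = (if even p then 0 else -1)"

lemma left_end_ge: "-1 \<le> left_end" and left_end_le_0: "left_end \<le> 0"
  and left_end_less_m_star: "left_end < m_star"
  using m_star_pos by (auto simp: left_end_def)

lemma d2H_neg_nonpos:
  assumes "0 \<le> \<beta>" "left_end < z" "z \<le> 0"
  shows "d2H \<beta> z < 0"
proof -
  have odd: "odd p" "-1 < z" using assms by (auto simp: left_end_def split: if_splits)
  then have "odd (p - 2)" using p_ge_3 by auto
  then have "z^(p-2) \<le> 0" using power_mono_odd[of "p-2" z 0] assms(3) p_ge_3 by (simp add: power_0_left)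
  moreover have "0 \<le> real p * (real p - 1) * \<beta>" using assms p_ge_3 by simp
  ultimately have "real p * (real p - 1) * \<beta> * z^(p-2) \<le> 0" by (simp add: mult_nonneg_nonpos)
  moreover have "0 < 1 / (1 - z^2)" using odd assms by (simp add: abs_square_less_1)
  ultimately show ?thesis unfolding d2H_def by linarith
qed

lemma kappa_bound_mono:
  assumes "0 \<le> \<beta>" "kappa z < kappa y" "real p * (real p - 1) * \<beta> * kappa y \<le> 1"
  shows "real p * (real p - 1) * \<beta> * kappa z < 1"
proof (cases "\<beta> = 0")
  case False
  then have "0 < real p * (real p - 1) * \<beta>" using assms p_ge_3 by simp
  then show ?thesis using assms by (smt (verit) mult_strict_left_mono)
qed simp

lemma d2H_neg_left:
  assumes "0 \<le> \<beta>" "left_end < z" "z < y" "y \<le> m_star"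
    and "y \<le> 0 \<or> real p * (real p - 1) * \<beta> * kappa y \<le> 1"
  shows "d2H \<beta> z < 0"
proof (cases "z \<le> 0")
  case False
  then have "kappa z < kappa y" using kappa_strict_mono[of z y] assms by auto
  then have "real p * (real p - 1) * \<beta> * kappa z < 1"
    using assms False by (intro kappa_bound_mono) auto
  then show ?thesis using d2H_neg_iff[of z \<beta>] assms m_star_less_1 False by auto
qed (use assms d2H_neg_nonpos in auto)

lemma d2H_neg_right:
  assumes "0 \<le> \<beta>" "m_star \<le> y" "y < z" "z < 1" "real p * (real p - 1) * \<beta> * kappa y \<le> 1"
  shows "d2H \<beta> z < 0"
proof -
  have "kappa z < kappa y" using kappa_strict_antimono assms by auto
  then have "real p * (real p - 1) * \<beta> * kappa z < 1" using assms by (intro kappa_bound_mono)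
  then show ?thesis using d2H_neg_iff[of z \<beta>] assms m_star_pos by auto
qed

lemma d2H_neg_subcritical:
  assumes "0 \<le> \<beta>" "\<beta> \<le> bcheck" "left_end < z" "z < 1" "z \<noteq> m_star"
  shows "d2H \<beta> z < 0"
proof (cases "z \<le> 0")
  case False
  have "real p * (real p - 1) * \<beta> * kappa z < 1"
  proof (cases "\<beta> = 0")
    case nonzero: False
    have "\<beta> * kappa z < \<beta> * kappa m_star"
      using kappa_less_kappa_m_star[of z] False nonzero assms by simp
    also have "\<dots> \<le> bcheck * kappa m_star"
      using assms kappa_m_star_pos by (intro mult_right_mono) auto
    finally have "real p * (real p - 1) * (\<beta> * kappa z) < real p * (real p - 1) * (bcheck * kappa m_star)"
      using p_ge_3 by (intro mult_strict_left_mono) auto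
    then show ?thesis using bcheck_kappa_m_star by (simp add: mult.assoc)
  qed simp
  then show ?thesis using d2H_neg_iff[of z \<beta>] assms False by simp
qed (use assms d2H_neg_nonpos in auto)

lemma d2H_m_star_pos: "bcheck < \<beta> \<Longrightarrow> 0 < d2H \<beta> m_star"
proof -
  assume "bcheck < \<beta>"
  then have "real p * (real p - 1) * (bcheck * kappa m_star) < real p * (real p - 1) * (\<beta> * kappa m_star)"
    using p_ge_3 kappa_m_star_pos by (intro mult_strict_left_mono) auto
  then show ?thesis
    using d2H_pos_iff[of m_star \<beta>] bcheck_kappa_m_star m_star_pos m_star_less_1 by (simp add: mult.assoc)
qed

lemma m_star_not_maximizer: "bcheck < \<beta> \<Longrightarrow> m_star \<notin> GM \<beta> h"
  using global_maximizer_d2H_nonpos d2H_m_star_pos by fastforce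

lemma global_maximizer_dH: "x \<in> GM \<beta> h \<Longrightarrow> dH \<beta> h x = 0"
  using global_maximizer_critical by (simp add: dH_def)

lemma maximizers_eq_of_concave:
  assumes "x \<in> GM \<beta> h" "y \<in> GM \<beta> h" "x \<le> y"
    and "\<And>z. x < z \<Longrightarrow> z < y \<Longrightarrow> d2H \<beta> z < 0"
  shows "x = y"
proof (rule ccontr)
  assume "x \<noteq> y"
  then have "dH \<beta> h y < dH \<beta> h x"
    using assms global_maximizer_interior[of x] global_maximizer_interior[of y]
    by (intro dH_strict_decreasing) auto
  then show False using global_maximizer_dH assms by simp
qed

lemma maximizers_unique_left:
  assumes "0 \<le> \<beta>" "x \<in> GM \<beta> h" "y \<in> GM \<beta> h" "x \<in> {left_end..m_star}" "y \<in> {left_end..m_star}"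
  shows "x = y"
proof -
  have "u = v" if "u \<in> GM \<beta> h" "v \<in> GM \<beta> h" "u \<le> v" "left_end \<le> u" "v \<le> m_star" for u v
  proof (rule maximizers_eq_of_concave[OF that(1-3)])
    have "v \<le> 0 \<or> real p * (real p - 1) * \<beta> * kappa v \<le> 1"
      using global_maximizer_kappa_le[OF that(2)] by force
    then show "d2H \<beta> z < 0" if "u < z" "z < v" for z
      using d2H_neg_left[OF assms(1)] \<open>u < z\<close> \<open>z < v\<close> \<open>left_end \<le> u\<close> \<open>v \<le> m_star\<close> by auto
  qed
  with assms show ?thesis by (cases "x \<le> y") force+
qed

lemma maximizers_unique_right:
  assumes "0 \<le> \<beta>" "x \<in> GM \<beta> h" "y \<in> GM \<beta> h" "m_star \<le> x" "m_star \<le> y"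
  shows "x = y"
proof -
  have "u = v" if "u \<in> GM \<beta> h" "v \<in> GM \<beta> h" "u \<le> v" "m_star \<le> u" for u v
  proof (rule maximizers_eq_of_concave[OF that(1-3)])
    have "real p * (real p - 1) * \<beta> * kappa u \<le> 1"
      using global_maximizer_kappa_le[OF that(1)] that(4) m_star_pos by simp
    then show "d2H \<beta> z < 0" if "u < z" "z < v" for z
      using d2H_neg_right[OF assms(1) \<open>m_star \<le> u\<close>] that global_maximizer_interior[OF \<open>v \<in> GM \<beta> h\<close>]
      by auto
  qed
  with assms show ?thesis by (cases "x \<le> y") force+
qed

lemma maximizers_unique_subcritical:
  assumes "0 \<le> \<beta>" "\<beta> \<le> bcheck" "x \<in> GM \<beta> h" "y \<in> GM \<beta> h" "left_end \<le> x" "left_end \<le> y"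
  shows "x = y"
proof -
  have "u = v" if "u \<in> GM \<beta> h" "v \<in> GM \<beta> h" "u \<le> v" "left_end \<le> u" for u v
  proof -
    have v1: "-1 < u" "v < 1"
      using global_maximizer_interior[OF that(1)] global_maximizer_interior[OF that(2)] by auto
    have dec: "dH \<beta> h b < dH \<beta> h a" if "u \<le> a" "a < b" "b \<le> v" "m_star \<notin> {a<..<b}" for a b
      using that \<open>left_end \<le> u\<close> v1
      by (intro dH_strict_decreasing d2H_neg_subcritical[OF assms(1,2)]) auto
    have "u \<noteq> v \<Longrightarrow> dH \<beta> h v < dH \<beta> h u"
      using dec[of u m_star] dec[of m_star v] dec[of u v] that(3) by fastforce
    then show ?thesis using global_maximizer_dH that by force
  qed
  with assms show ?thesis by (cases "x \<le> y") force+
qed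

lemma maximizers_separated:
  assumes "bcheck < \<beta>" "x \<in> GM \<beta> h" "y \<in> GM \<beta> h" "x \<noteq> y" "left_end \<le> x" "left_end \<le> y"
  shows "x < m_star \<longleftrightarrow> m_star < y"
proof -
  have "0 \<le> \<beta>" using assms bcheck_pos by simp
  moreover have "x \<noteq> m_star" "y \<noteq> m_star" using m_star_not_maximizer assms by auto
  ultimately show ?thesis
    using maximizers_unique_left[of \<beta> x h y] maximizers_unique_right[of \<beta> x h y] assms by force
qed

section \<open>Comparing the two wells\<close>

definition Hmax_left :: "real \<Rightarrow> real \<Rightarrow> real" where
  "Hmax_left \<beta> h = Hsup \<beta> h p {left_end..m_star}"

definition Hmax_right :: "real \<Rightarrow> real \<Rightarrow> real" where
  "Hmax_right \<beta> h = Hsup \<beta> h p {m_star..1}"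

definition Delta :: "real \<Rightarrow> real \<Rightarrow> real" where
  "Delta \<beta> h = Hmax_right \<beta> h - Hmax_left \<beta> h"

lemma left_well: "compact {left_end..m_star}" "{left_end..m_star} \<noteq> {}" "{left_end..m_star} \<subseteq> {-1..1}"
  using left_end_ge left_end_less_m_star m_star_less_1 by auto

lemma right_well: "compact {m_star..1}" "{m_star..1} \<noteq> {}" "{m_star..1} \<subseteq> {-1..1}"
  using m_star_pos m_star_less_1 by auto

lemma Hmax_left_attained: "\<exists>x. left_end \<le> x \<and> x \<le> m_star \<and> H \<beta> h x = Hmax_left \<beta> h"
  using Hsup_attained[OF left_well, of \<beta> h p] by (auto simp: Hmax_left_def)

lemma Hmax_right_attained: "\<exists>x. m_star \<le> x \<and> x \<le> 1 \<and> H \<beta> h x = Hmax_right \<beta> h"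
  using Hsup_attained[OF right_well, of \<beta> h p] by (auto simp: Hmax_right_def)

lemma H_le_Hmax_left: "left_end \<le> x \<Longrightarrow> x \<le> m_star \<Longrightarrow> H \<beta> h x \<le> Hmax_left \<beta> h"
  using Hfun_le_Hsup[OF left_well(1,3)] by (auto simp: Hmax_left_def)

lemma H_le_Hmax_right: "m_star \<le> x \<Longrightarrow> x \<le> 1 \<Longrightarrow> H \<beta> h x \<le> Hmax_right \<beta> h"
  using Hfun_le_Hsup[OF right_well(1,3)] by (auto simp: Hmax_right_def)

lemma H_le_Hmax: "x \<in> {-1..1} \<Longrightarrow> H \<beta> h x \<le> Hmax \<beta> h"
  by (rule Hfun_le_Hsup) auto

lemma Hmax_left_le: "Hmax_left \<beta> h \<le> Hmax \<beta> h"
proof -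
  obtain x where "left_end \<le> x" "x \<le> m_star" "H \<beta> h x = Hmax_left \<beta> h"
    using Hmax_left_attained by blast
  then show ?thesis using H_le_Hmax[of x \<beta> h] left_end_ge m_star_less_1 by simp
qed

lemma Hmax_right_le: "Hmax_right \<beta> h \<le> Hmax \<beta> h"
proof -
  obtain x where "m_star \<le> x" "x \<le> 1" "H \<beta> h x = Hmax_right \<beta> h"
    using Hmax_right_attained by blast
  then show ?thesis using H_le_Hmax[of x \<beta> h] m_star_pos by simp
qed

lemma Hmax_eq_max:
  assumes "GM \<beta> h \<subseteq> {left_end..1}"
  shows "Hmax \<beta> h = max (Hmax_left \<beta> h) (Hmax_right \<beta> h)"
proof -
  obtain g where "g \<in> GM \<beta> h" using global_maximizers_nonempty by blast
  then have g: "H \<beta> h g = Hmax \<beta> h" "left_end \<le> g" "g \<le> 1"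
    using assms by (auto simp: global_maximizers_iff)
  then have "Hmax \<beta> h \<le> max (Hmax_left \<beta> h) (Hmax_right \<beta> h)"
    using H_le_Hmax_left[of g \<beta> h] H_le_Hmax_right[of g \<beta> h] by (cases "g \<le> m_star") auto
  then show ?thesis using Hmax_left_le[of \<beta> h] Hmax_right_le[of \<beta> h] by linarith
qed

lemma Delta_zero_left_maximizer:
  assumes "bcheck < \<beta>" "GM \<beta> h \<subseteq> {left_end..1}" "Delta \<beta> h = 0"
    and "left_end \<le> x" "x \<le> m_star" "H \<beta> h x = Hmax_left \<beta> h"
  shows "x \<in> GM \<beta> h" "x < m_star"
proof -
  show gm: "x \<in> GM \<beta> h"
    using assms Hmax_eq_max[OF assms(2)] left_end_ge m_star_less_1
    by (auto simp: global_maximizers_iff Delta_def)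
  show "x < m_star" using m_star_not_maximizer[OF assms(1), of h] gm assms(5) by (cases "x = m_star") auto
qed

lemma Delta_zero_right_maximizer:
  assumes "bcheck < \<beta>" "GM \<beta> h \<subseteq> {left_end..1}" "Delta \<beta> h = 0"
    and "m_star \<le> x" "x \<le> 1" "H \<beta> h x = Hmax_right \<beta> h"
  shows "x \<in> GM \<beta> h" "m_star < x"
proof -
  show gm: "x \<in> GM \<beta> h"
    using assms Hmax_eq_max[OF assms(2)] m_star_pos
    by (auto simp: global_maximizers_iff Delta_def)
  show "m_star < x" using m_star_not_maximizer[OF assms(1), of h] gm assms(4) by (cases "x = m_star") auto
qed

lemma card_maximizers_eq_2_iff:
  assumes "bcheck < \<beta>" "GM \<beta> h \<subseteq> {left_end..1}"
  shows "card (GM \<beta> h) = 2 \<longleftrightarrow> Delta \<beta> h = 0"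
proof
  assume "card (GM \<beta> h) = 2"
  then obtain a c where ac: "GM \<beta> h = {a, c}" "a \<noteq> c" by (auto simp: card_2_iff)
  have sep: "u < m_star \<longleftrightarrow> m_star < v" if "u \<in> {a, c}" "v \<in> {a, c}" "u \<noteq> v" for u v
    using maximizers_separated[OF assms(1), of u h v] that ac assms(2) by auto
  have "a \<noteq> m_star" using m_star_not_maximizer[OF assms(1)] ac by auto
  then obtain x y where xy: "GM \<beta> h = {x, y}" "x < m_star" "m_star < y"
  proof (cases "a < m_star")
    case True
    then show ?thesis using that[of a c] sep[of a c] ac by auto
  next
    case False
    then show ?thesis using that[of c a] sep[of c a] ac \<open>a \<noteq> m_star\<close> by (auto simp: insert_commute)
  qed
  have "x \<in> GM \<beta> h" "y \<in> GM \<beta> h" using xy by auto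
  then have "H \<beta> h x = Hmax \<beta> h" "H \<beta> h y = Hmax \<beta> h" "left_end \<le> x" "y < 1"
    using assms(2) global_maximizer_interior[of y] by (auto simp: global_maximizers_iff)
  then have "Hmax \<beta> h \<le> Hmax_left \<beta> h" "Hmax \<beta> h \<le> Hmax_right \<beta> h"
    using H_le_Hmax_left[of x \<beta> h] H_le_Hmax_right[of y \<beta> h] xy by auto
  then show "Delta \<beta> h = 0"
    using Hmax_left_le[of \<beta> h] Hmax_right_le[of \<beta> h] by (simp add: Delta_def)
next
  assume D: "Delta \<beta> h = 0"
  obtain xL where xL: "left_end \<le> xL" "xL \<le> m_star" "H \<beta> h xL = Hmax_left \<beta> h"
    using Hmax_left_attained by blast
  obtain xR where xR: "m_star \<le> xR" "xR \<le> 1" "H \<beta> h xR = Hmax_right \<beta> h"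
    using Hmax_right_attained by blast
  note L = Delta_zero_left_maximizer[OF assms D xL] and R = Delta_zero_right_maximizer[OF assms D xR]
  have "z = xL \<or> z = xR" if "z \<in> GM \<beta> h" for z
  proof -
    have "left_end \<le> z" "z \<noteq> m_star" using that assms m_star_not_maximizer by auto
    then show ?thesis
      using maximizers_unique_left[of \<beta> z h xL] maximizers_unique_right[of \<beta> z h xR]
        that L R xL assms(1) bcheck_pos by force
  qed
  then have "GM \<beta> h = {xL, xR}" using L R by auto
  then show "card (GM \<beta> h) = 2" using L(2) R(2) by simp
qed

lemma Delta_diff_ge_h:
  assumes "m_star \<le> xR" "xR \<le> 1" "H \<beta> h xR = Hmax_right \<beta> h"
    and "left_end \<le> xL" "xL \<le> m_star" "H \<beta> h' xL = Hmax_left \<beta> h'"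
  shows "(h' - h) * (xR - xL) \<le> Delta \<beta> h' - Delta \<beta> h"
  using H_le_Hmax_right[of xR \<beta> h'] H_le_Hmax_left[of xL \<beta> h]
    Hfun_shift[of \<beta> h' p xR \<beta> h] Hfun_shift[of \<beta> h p xL \<beta> h'] assms
  by (simp add: Delta_def algebra_simps)

lemma Delta_diff_ge_beta:
  assumes "m_star \<le> xR" "xR \<le> 1" "H \<beta> h xR = Hmax_right \<beta> h"
    and "left_end \<le> xL" "xL \<le> m_star" "H \<beta>' h xL = Hmax_left \<beta>' h"
  shows "(\<beta>' - \<beta>) * (xR^p - xL^p) \<le> Delta \<beta>' h - Delta \<beta> h"
  using H_le_Hmax_right[of xR \<beta>' h] H_le_Hmax_left[of xL \<beta> h]
    Hfun_shift[of \<beta>' h p xR \<beta> h] Hfun_shift[of \<beta> h p xL \<beta>' h] assms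
  by (simp add: Delta_def algebra_simps)

lemma Delta_mono: "h \<le> h' \<Longrightarrow> Delta \<beta> h \<le> Delta \<beta> h'"
proof -
  assume "h \<le> h'"
  obtain xR where xR: "m_star \<le> xR" "xR \<le> 1" "H \<beta> h xR = Hmax_right \<beta> h"
    using Hmax_right_attained by blast
  obtain xL where xL: "left_end \<le> xL" "xL \<le> m_star" "H \<beta> h' xL = Hmax_left \<beta> h'"
    using Hmax_left_attained by blast
  have "0 \<le> (h' - h) * (xR - xL)" using \<open>h \<le> h'\<close> xR xL by simp
  then show ?thesis using Delta_diff_ge_h[OF xR xL] by simp
qed

lemma Delta_zero_less: "Delta \<beta> h0 = 0 \<Longrightarrow> 0 < Delta \<beta> h \<Longrightarrow> h0 < h"
  using Delta_mono[of h h0 \<beta>] by force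

lemma Delta_zero_greater: "Delta \<beta> h0 = 0 \<Longrightarrow> Delta \<beta> h < 0 \<Longrightarrow> h < h0"
  using Delta_mono[of h0 h \<beta>] by force

lemma abs_Delta_diff_le: "\<bar>Delta \<beta> h - Delta \<beta>' h'\<bar> \<le> 2 * (\<bar>\<beta> - \<beta>'\<bar> + \<bar>h - h'\<bar>)"
  using abs_Hsup_diff_le[OF left_well, of \<beta> h p \<beta>' h'] abs_Hsup_diff_le[OF right_well, of \<beta> h p \<beta>' h']
  by (simp add: Delta_def Hmax_left_def Hmax_right_def abs_le_iff)

lemma continuous_on_Delta_h: "continuous_on S (Delta \<beta>)"
proof (rule lipschitz_on_continuous_on)
  show "2-lipschitz_on S (Delta \<beta>)"
    using abs_Delta_diff_le[of \<beta> _ \<beta>] by (intro lipschitz_onI) (auto simp: dist_real_def)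
qed

lemma isCont_Delta_beta: "isCont (\<lambda>\<beta>. Delta \<beta> h) \<beta>0"
proof (rule continuous_on_interior[of UNIV], rule lipschitz_on_continuous_on)
  show "2-lipschitz_on UNIV (\<lambda>\<beta>. Delta \<beta> h)"
    using abs_Delta_diff_le[of _ h _ h] by (intro lipschitz_onI) (auto simp: dist_real_def)
qed auto

text \<open>At a zero of \<^term>\<open>Delta \<beta>\<close> the right maximizer lies strictly to the right of the left one, so
  \<^term>\<open>Delta \<beta>\<close> changes sign strictly there.\<close>
lemma Delta_strict_at_zero:
  assumes "bcheck < \<beta>" "GM \<beta> h0 \<subseteq> {left_end..1}" "Delta \<beta> h0 = 0"
  shows "h0 < h \<Longrightarrow> 0 < Delta \<beta> h" and "h < h0 \<Longrightarrow> Delta \<beta> h < 0"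
proof -
  assume "h0 < h"
  obtain xR where xR: "m_star \<le> xR" "xR \<le> 1" "H \<beta> h0 xR = Hmax_right \<beta> h0"
    using Hmax_right_attained by blast
  obtain xL where xL: "left_end \<le> xL" "xL \<le> m_star" "H \<beta> h xL = Hmax_left \<beta> h"
    using Hmax_left_attained by blast
  have "0 < (h - h0) * (xR - xL)"
    using Delta_zero_right_maximizer(2)[OF assms xR] \<open>h0 < h\<close> xL by simp
  then show "0 < Delta \<beta> h" using Delta_diff_ge_h[OF xR xL] assms(3) by simp
next
  assume "h < h0"
  obtain xR where xR: "m_star \<le> xR" "xR \<le> 1" "H \<beta> h xR = Hmax_right \<beta> h"
    using Hmax_right_attained by blast
  obtain xL where xL: "left_end \<le> xL" "xL \<le> m_star" "H \<beta> h0 xL = Hmax_left \<beta> h0"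
    using Hmax_left_attained by blast
  have "0 < (h0 - h) * (xR - xL)"
    using Delta_zero_left_maximizer(2)[OF assms xL] \<open>h < h0\<close> xR by simp
  then show "Delta \<beta> h < 0" using Delta_diff_ge_h[OF xR xL] assms(3) by simp
qed

lemma Delta_ge_linear: "0 \<le> h \<Longrightarrow> h * (1 - m_star) - ln 2 - 2 * \<bar>\<beta>\<bar> \<le> Delta \<beta> h"
proof -
  assume "0 \<le> h"
  obtain x where x: "left_end \<le> x" "x \<le> m_star" "H \<beta> h x = Hmax_left \<beta> h"
    using Hmax_left_attained by blast
  then have x1: "x \<in> {-1..1}" using left_end_ge m_star_less_1 by auto
  have "\<bar>x\<bar>^p \<le> 1" using x1 by (intro power_le_one) auto
  then have "\<beta> * x^p \<le> \<bar>\<beta>\<bar>"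
    using abs_ge_self[of "\<beta> * x^p"] mult_left_le[of "\<bar>x\<bar>^p" "\<bar>\<beta>\<bar>"]
    by (simp add: abs_mult power_abs)
  moreover have "h * x \<le> h * m_star" using \<open>0 \<le> h\<close> x by (simp add: mult_left_mono)
  ultimately have "Hmax_left \<beta> h \<le> \<bar>\<beta>\<bar> + h * m_star"
    using x Ient_nonneg[OF x1] by (simp add: Hfun_def)
  moreover have "\<beta> + h - ln 2 \<le> Hmax_right \<beta> h"
    using H_le_Hmax_right[of 1 \<beta> h] m_star_less_1 by (simp add: Hfun_def Ient_1)
  ultimately show ?thesis by (simp add: Delta_def algebra_simps)
qed

section \<open>The threshold \<^term>\<open>beta_tilde p\<close>\<close>

lemma H_0: "H \<beta> h 0 = 0"
  using p_ge_3 by (simp add: Hfun_0)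

lemma Hmax_nonneg: "0 \<le> Hmax \<beta> h"
  using H_le_Hmax[of 0 \<beta> h] H_0 by simp

definition paramagnetic :: "real set" where
  "paramagnetic = {\<beta>. 0 \<le> \<beta> \<and> Hmax \<beta> 0 = 0}"

lemma btilde_eq_Sup: "btilde = Sup paramagnetic"
  by (simp add: beta_tilde_def paramagnetic_def Hsup_def)

lemma paramagnetic_0: "0 \<in> paramagnetic"
proof -
  obtain x where "x \<in> {-1..1}" "H 0 0 x = Hmax 0 0"
    using Hsup_attained[of "{-1..1}" 0 0 p] by auto
  then have "Hmax 0 0 \<le> 0" using Ient_nonneg[of x] by (simp add: Hfun_def)
  then show ?thesis using Hmax_nonneg[of 0 0] by (simp add: paramagnetic_def)
qed

lemma paramagnetic_downward:
  assumes "\<beta> \<in> paramagnetic" "0 \<le> \<beta>'" "\<beta>' \<le> \<beta>"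
  shows "\<beta>' \<in> paramagnetic"
proof -
  obtain x where x: "x \<in> {-1..1}" "H \<beta>' 0 x = Hmax \<beta>' 0"
    using Hsup_attained[of "{-1..1}" \<beta>' 0 p] by auto
  have "H \<beta>' 0 x \<le> 0"
  proof (cases "0 \<le> x^p")
    case True
    then have "H \<beta>' 0 x \<le> H \<beta> 0 x" using assms by (simp add: Hfun_def mult_right_mono)
    also have "\<dots> \<le> 0" using H_le_Hmax[OF x(1), of \<beta> 0] assms by (simp add: paramagnetic_def)
    finally show ?thesis .
  next
    case False
    then have "\<beta>' * x^p \<le> 0" using assms by (simp add: mult_nonneg_nonpos)
    then show ?thesis using Ient_nonneg[OF x(1)] by (simp add: Hfun_def)
  qed
  then show ?thesis using x Hmax_nonneg[of \<beta>' 0] assms by (simp add: paramagnetic_def)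
qed

lemma paramagnetic_le_ln2: "\<beta> \<in> paramagnetic \<Longrightarrow> \<beta> \<le> ln 2"
  using H_le_Hmax[of 1 \<beta> 0] by (simp add: paramagnetic_def Hfun_def Ient_1)

lemma bdd_above_paramagnetic: "bdd_above paramagnetic"
  using paramagnetic_le_ln2 by (auto simp: bdd_above_def)

lemma btilde_nonneg: "0 \<le> btilde"
  unfolding btilde_eq_Sup by (rule cSup_upper[OF paramagnetic_0 bdd_above_paramagnetic])

text \<open>\<^term>\<open>paramagnetic\<close> is closed because \<^term>\<open>Hmax\<close> is Lipschitz in \<open>\<beta>\<close>.\<close>
lemma btilde_paramagnetic: "btilde \<in> paramagnetic"
proof -
  have "Hmax btilde 0 \<le> 0"
  proof (rule ccontr)
    assume "\<not> Hmax btilde 0 \<le> 0"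
    then have "btilde - Hmax btilde 0 / 2 < Sup paramagnetic" by (simp add: btilde_eq_Sup)
    then obtain \<beta> where \<beta>: "\<beta> \<in> paramagnetic" "btilde - Hmax btilde 0 / 2 < \<beta>"
      using less_cSupE[of _ paramagnetic] paramagnetic_0 by blast
    moreover have "\<beta> \<le> btilde"
      unfolding btilde_eq_Sup by (rule cSup_upper[OF \<beta>(1) bdd_above_paramagnetic])
    moreover have "\<bar>Hmax btilde 0 - Hmax \<beta> 0\<bar> \<le> \<bar>btilde - \<beta>\<bar> + \<bar>0 - 0\<bar>"
      by (rule abs_Hsup_diff_le) auto
    ultimately show False using \<open>\<not> Hmax btilde 0 \<le> 0\<close> by (simp add: paramagnetic_def)
  qed
  then show ?thesis using Hmax_nonneg[of btilde 0] btilde_nonneg by (simp add: paramagnetic_def)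
qed

lemma Hmax_eq_0_iff:
  assumes "0 \<le> \<beta>"
  shows "Hmax \<beta> 0 = 0 \<longleftrightarrow> \<beta> \<le> btilde"
proof
  assume "Hmax \<beta> 0 = 0"
  then have "\<beta> \<in> paramagnetic" using assms by (simp add: paramagnetic_def)
  then show "\<beta> \<le> btilde" unfolding btilde_eq_Sup by (rule cSup_upper[OF _ bdd_above_paramagnetic])
next
  assume "\<beta> \<le> btilde"
  then show "Hmax \<beta> 0 = 0"
    using paramagnetic_downward[OF btilde_paramagnetic assms] by (simp add: paramagnetic_def)
qed

lemma Hmax_pos: "btilde < \<beta> \<Longrightarrow> 0 < Hmax \<beta> 0"
  using Hmax_eq_0_iff[of \<beta>] Hmax_nonneg[of \<beta> 0] btilde_nonneg by fastforce

lemma maximizer_btilde_0: "0 \<in> GM btilde 0"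
  using Hmax_eq_0_iff[OF btilde_nonneg] H_0 by (simp add: global_maximizers_iff)

lemma H_pos_imp_far_from_0:
  assumes "0 < \<beta>" "\<bar>x\<bar> < 1" "0 < H \<beta> 0 x"
  shows "1 < 2 * \<beta> * \<bar>x\<bar>"
proof -
  have "2 + (p - 2) = p" using p_ge_3 by simp
  then have "\<bar>x\<bar>^p = \<bar>x\<bar>^2 * \<bar>x\<bar>^(p-2)" by (metis power_add)
  also have "\<dots> \<le> \<bar>x\<bar>^2 * \<bar>x\<bar>^1"
    using assms p_ge_3 by (intro mult_left_mono power_decreasing) auto
  finally have "\<beta> * x^p \<le> \<beta> * (\<bar>x\<bar>^2 * \<bar>x\<bar>)"
    using assms(1) by (intro mult_left_mono) (auto intro: order_trans[OF abs_ge_self] simp: power_abs)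
  then have "x^2 / 2 < \<beta> * (\<bar>x\<bar>^2 * \<bar>x\<bar>)"
    using Ient_ge_half_square[OF assms(2)] assms(3) by (simp add: Hfun_def)
  then have "\<bar>x\<bar>^2 * (1/2) < \<bar>x\<bar>^2 * (\<beta> * \<bar>x\<bar>)" by (simp add: algebra_simps)
  then have "1/2 < \<beta> * \<bar>x\<bar>"
    using mult_less_cancel_left_pos[of "\<bar>x\<bar>^2"] by (cases "x = 0") auto
  then show ?thesis by simp
qed

lemma maximizer_far_from_0:
  assumes "btilde < \<beta>" "x \<in> GM \<beta> 0"
  shows "1 / (2 * \<beta>) < \<bar>x\<bar>"
proof -
  have "0 < \<beta>" using assms btilde_nonneg by simp
  have "H \<beta> 0 x = Hmax \<beta> 0" "\<bar>x\<bar> < 1"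
    using assms(2) global_maximizer_interior[OF assms(2)] by (auto simp: global_maximizers_iff)
  then have "1 < 2 * \<beta> * \<bar>x\<bar>"
    using H_pos_imp_far_from_0[OF \<open>0 < \<beta>\<close>] Hmax_pos[OF assms(1)] by simp
  then show ?thesis using \<open>0 < \<beta>\<close> by (simp add: field_simps)
qed

text \<open>Maximizers for \<open>\<beta>\<close> slightly above \<^term>\<open>beta_tilde p\<close> stay away from \<open>0\<close>; by continuity
  in \<open>\<beta>\<close> one of them survives at \<^term>\<open>beta_tilde p\<close>.\<close>
lemma nonzero_maximizer_btilde: "\<exists>x. x \<in> GM btilde 0 \<and> x \<noteq> 0"
proof -
  define \<delta> where "\<delta> = min (1/2) (1 / (2 * (btilde + 1)))"
  have \<delta>: "0 < \<delta>" "\<delta> \<le> 1/2" using btilde_nonneg by (auto simp: \<delta>_def)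
  define K where "K = {-1..-\<delta>} \<union> {\<delta>..1}"
  have K: "compact K" "K \<noteq> {}" "K \<subseteq> {-1..1}" using \<delta> by (auto simp: K_def)
  have pos: "0 < Hsup (btilde + e) 0 p K" if "0 < e" "e \<le> 1" for e
  proof -
    obtain g where g: "g \<in> GM (btilde + e) 0" using global_maximizers_nonempty by blast
    then have "1 / (2 * (btilde + e)) < \<bar>g\<bar>" "\<bar>g\<bar> \<le> 1" "0 < H (btilde + e) 0 g"
      using maximizer_far_from_0[of "btilde + e" g] Hmax_pos[of "btilde + e"] that
      by (auto simp: global_maximizers_iff)
    moreover have "1 / (2 * (btilde + 1)) \<le> 1 / (2 * (btilde + e))"
      using that btilde_nonneg by (intro divide_left_mono) auto
    ultimately have "g \<in> K" by (auto simp: K_def \<delta>_def)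
    then show ?thesis
      using Hfun_le_Hsup[OF K(1,3), of g "btilde + e" 0 p] \<open>0 < H (btilde + e) 0 g\<close> by simp
  qed
  have "0 \<le> Hsup btilde 0 p K"
  proof (rule ccontr)
    assume "\<not> 0 \<le> Hsup btilde 0 p K"
    define e where "e = min 1 (- Hsup btilde 0 p K / 2)"
    have e: "0 < e" "e \<le> 1" "e \<le> - Hsup btilde 0 p K / 2"
      using \<open>\<not> 0 \<le> Hsup btilde 0 p K\<close> by (auto simp: e_def)
    have "Hsup (btilde + e) 0 p K \<le> Hsup btilde 0 p K + e"
      using abs_Hsup_diff_le[OF K, of "btilde + e" 0 p btilde 0] e by simp
    then show False using pos[OF e(1,2)] e by linarith
  qed
  moreover obtain x where x: "x \<in> K" "H btilde 0 x = Hsup btilde 0 p K"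
    using Hsup_attained[OF K] by blast
  ultimately have "x \<in> GM btilde 0"
    using K(3) H_le_Hmax[of x btilde 0] Hmax_eq_0_iff[OF btilde_nonneg]
    by (auto simp: global_maximizers_iff)
  moreover have "x \<noteq> 0" using x \<delta> by (auto simp: K_def)
  ultimately show ?thesis by blast
qed

text \<open>At \<open>h = 0\<close> the point \<open>0\<close> is critical, so a positive maximizer cannot lie in the concave
  region \<open>(0, m\<^sub>*]\<close>.\<close>
lemma positive_maximizer_gt_m_star:
  assumes "0 \<le> \<beta>" "y \<in> GM \<beta> 0" "0 < y"
  shows "m_star < y"
proof (rule ccontr)
  assume "\<not> m_star < y"
  have "real p * (real p - 1) * \<beta> * kappa y \<le> 1"
    using global_maximizer_kappa_le[OF assms(2,3)] .
  then have "dH \<beta> 0 y < dH \<beta> 0 0"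
    using assms \<open>\<not> m_star < y\<close> m_star_less_1 left_end_le_0
    by (intro dH_strict_decreasing d2H_neg_left[OF assms(1)]) auto
  moreover have "dH \<beta> 0 0 = 0" using p_ge_3 by (simp add: dH_def)
  ultimately show False using global_maximizer_dH[OF assms(2)] by simp
qed

lemma positive_maximizer_btilde: "\<exists>y. y \<in> GM btilde 0 \<and> m_star < y"
proof -
  obtain x where x: "x \<in> GM btilde 0" "x \<noteq> 0" using nonzero_maximizer_btilde by blast
  have G: "Hmax btilde 0 = 0" using Hmax_eq_0_iff[OF btilde_nonneg] by simp
  have "\<exists>y. y \<in> GM btilde 0 \<and> 0 < y"
  proof (cases "0 < x")
    case False
    then have neg: "x < 0" using x by simp
    show ?thesis
    proof (cases "even p")
      case True
      then have "-x \<in> GM btilde 0"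
        using x(1) by (auto simp: global_maximizers_iff Hfun_minus)
      then show ?thesis using neg by auto
    next
      case False
      have "x^p \<le> 0" using power_mono_odd[OF False, of x 0] neg p_ge_3 by (simp add: power_0_left)
      then have "btilde * x^p \<le> 0" using btilde_nonneg by (simp add: mult_nonneg_nonpos)
      moreover have "0 < Ient x"
        using Ient_ge_half_square[of x] global_maximizer_interior[OF x(1)] x(2)
        by (smt (verit) zero_less_power2 half_gt_zero abs_less_iff)
      ultimately have "H btilde 0 x < 0" by (simp add: Hfun_def)
      then show ?thesis using x G by (simp add: global_maximizers_iff)
    qed
  qed (use x in blast)
  then show ?thesis using positive_maximizer_gt_m_star[OF btilde_nonneg] by blast
qed

theorem bcheck_less_btilde: "bcheck < btilde"
proof (rule ccontr)
  assume "\<not> bcheck < btilde"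
  obtain y where "y \<in> GM btilde 0" "m_star < y" using positive_maximizer_btilde by blast
  then show False
    using maximizers_unique_subcritical[OF btilde_nonneg _ maximizer_btilde_0, of y]
      \<open>\<not> bcheck < btilde\<close> left_end_le_0 m_star_pos by auto
qed

lemma Delta_btilde_0: "Delta btilde 0 = 0"
proof -
  obtain y where y: "y \<in> GM btilde 0" "m_star < y" using positive_maximizer_btilde by blast
  then have "Hmax btilde 0 \<le> Hmax_right btilde 0"
    using H_le_Hmax_right[of y btilde 0] global_maximizer_interior[of y] by (auto simp: global_maximizers_iff)
  moreover have "Hmax btilde 0 \<le> Hmax_left btilde 0"
    using H_le_Hmax_left[of 0 btilde 0] maximizer_btilde_0 left_end_le_0 m_star_pos
    by (auto simp: global_maximizers_iff)
  ultimately show ?thesis using Hmax_left_le[of btilde 0] Hmax_right_le[of btilde 0] by (simp add: Delta_def)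
qed

section \<open>The zero of \<^term>\<open>Delta\<close> as a function of \<open>\<beta>\<close>\<close>

lemma power_le_m_star_power: "left_end \<le> x \<Longrightarrow> x \<le> m_star \<Longrightarrow> x^p \<le> m_star^p"
  by (cases "even p") (auto simp: left_end_def intro: power_mono power_mono_odd)

lemma Delta_pos_of_beta_less:
  assumes "bcheck < \<beta>1" "\<beta>1 < \<beta>2" "GM \<beta>1 h \<subseteq> {left_end..1}" "Delta \<beta>1 h = 0"
  shows "0 < Delta \<beta>2 h"
proof -
  obtain xR where xR: "m_star \<le> xR" "xR \<le> 1" "H \<beta>1 h xR = Hmax_right \<beta>1 h"
    using Hmax_right_attained by blast
  obtain xL where xL: "left_end \<le> xL" "xL \<le> m_star" "H \<beta>2 h xL = Hmax_left \<beta>2 h"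
    using Hmax_left_attained by blast
  have "m_star^p < xR^p"
    using Delta_zero_right_maximizer(2)[OF assms(1,3,4) xR] m_star_pos p_ge_3
    by (intro power_strict_mono) auto
  moreover have "xL^p \<le> m_star^p" using power_le_m_star_power xL by auto
  ultimately have "0 < (\<beta>2 - \<beta>1) * (xR^p - xL^p)" using assms(2) by simp
  then show ?thesis using Delta_diff_ge_beta[OF xR xL] assms(4) by simp
qed

lemma Delta_ge_beta:
  assumes "0 \<le> \<beta>"
  shows "\<beta> * (1 - m_star^p) + h - \<bar>h\<bar> - ln 2 \<le> Delta \<beta> h"
proof -
  obtain x where x: "left_end \<le> x" "x \<le> m_star" "H \<beta> h x = Hmax_left \<beta> h"
    using Hmax_left_attained by blast
  have x1: "x \<in> {-1..1}" using x left_end_ge m_star_less_1 by auto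
  have "\<beta> * x^p \<le> \<beta> * m_star^p" using power_le_m_star_power[OF x(1,2)] assms by (rule mult_left_mono)
  moreover have "h * x \<le> \<bar>h\<bar>"
    using x1 abs_ge_self[of "h * x"] abs_le_iff[of x 1] mult_left_le[of "\<bar>x\<bar>" "\<bar>h\<bar>"] by (simp add: abs_mult)
  ultimately have "Hmax_left \<beta> h \<le> \<beta> * m_star^p + \<bar>h\<bar>"
    using x Ient_nonneg[OF x1] by (simp add: Hfun_def)
  moreover have "\<beta> + h - ln 2 \<le> Hmax_right \<beta> h"
    using H_le_Hmax_right[of 1 \<beta> h] m_star_less_1 by (simp add: Hfun_def Ient_1)
  ultimately show ?thesis by (simp add: Delta_def algebra_simps)
qed

definition h_star :: real where
  "h_star = artanh m_star - real p * bcheck * m_star^(p-1)"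

lemma dH_h_star: "dH bcheck (h_star + e) m_star = e"
  by (simp add: dH_def h_star_def)

text \<open>At \<^term>\<open>beta_check p\<close>, the field \<^term>\<open>h_star\<close> makes \<open>m\<^sub>*\<close> an inflection point of zero slope;
  any perturbation \<open>\<plusminus>e\<close> of the field pushes the maximum to one well.\<close>
lemma Delta_bcheck_above:
  assumes "0 < e"
  shows "0 < Delta bcheck (h_star + e)"
proof -
  let ?h = "h_star + e"
  have dH_pos: "0 < dH bcheck ?h z" if "left_end < z" "z < m_star" for z
  proof -
    have "dH bcheck ?h m_star < dH bcheck ?h z"
      using that left_end_ge m_star_less_1 bcheck_pos
      by (intro dH_strict_decreasing d2H_neg_subcritical) auto
    then show ?thesis using dH_h_star assms by simp
  qed
  obtain xL where xL: "left_end \<le> xL" "xL \<le> m_star" "H bcheck ?h xL = Hmax_left bcheck ?h"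
    using Hmax_left_attained by blast
  have "xL = m_star"
  proof (rule ccontr)
    assume "xL \<noteq> m_star"
    then have "H bcheck ?h xL < H bcheck ?h m_star"
      using xL left_end_ge m_star_less_1 dH_pos by (intro H_strict_increasing) auto
    then show False using H_le_Hmax_left[of m_star bcheck ?h] left_end_less_m_star xL by simp
  qed
  obtain d where d: "0 < d" "\<And>t. 0 < t \<Longrightarrow> t < d \<Longrightarrow> H bcheck ?h m_star < H bcheck ?h (m_star + t)"
    using DERIV_pos_inc_right[OF H_has_real_derivative, of m_star bcheck ?h]
      dH_h_star assms m_star_pos m_star_less_1 by force
  define t where "t = min d (1 - m_star) / 2"
  have t: "0 < t" "t < d" "m_star + t \<le> 1"
    using d(1) m_star_less_1 by (auto simp: t_def min_def field_simps)
  have "Hmax_left bcheck ?h = H bcheck ?h m_star" using xL \<open>xL = m_star\<close> by simp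
  also have "\<dots> < H bcheck ?h (m_star + t)" using d t by auto
  also have "\<dots> \<le> Hmax_right bcheck ?h" using H_le_Hmax_right[of "m_star + t"] t by auto
  finally show ?thesis by (simp add: Delta_def)
qed

lemma Delta_bcheck_below:
  assumes "0 < e"
  shows "Delta bcheck (h_star - e) < 0"
proof -
  let ?h = "h_star + (- e)"
  have dH_neg: "dH bcheck ?h z < 0" if "m_star < z" "z < 1" for z
  proof -
    have "dH bcheck ?h z < dH bcheck ?h m_star"
      using that m_star_pos left_end_less_m_star bcheck_pos
      by (intro dH_strict_decreasing d2H_neg_subcritical) auto
    then show ?thesis using dH_h_star[of "-e"] assms by simp
  qed
  obtain xR where xR: "m_star \<le> xR" "xR \<le> 1" "H bcheck ?h xR = Hmax_right bcheck ?h"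
    using Hmax_right_attained by blast
  have "xR = m_star"
  proof (rule ccontr)
    assume "xR \<noteq> m_star"
    then have "H bcheck ?h xR < H bcheck ?h m_star"
      using xR m_star_pos dH_neg by (intro H_strict_decreasing) auto
    then show False using H_le_Hmax_right[of m_star bcheck ?h] m_star_less_1 xR by simp
  qed
  obtain d where d: "0 < d" "\<And>t. 0 < t \<Longrightarrow> t < d \<Longrightarrow> H bcheck ?h m_star < H bcheck ?h (m_star - t)"
    using DERIV_neg_dec_left[OF H_has_real_derivative, of m_star bcheck ?h]
      dH_h_star[of "-e"] assms m_star_pos m_star_less_1 by force
  define t where "t = min d (m_star - left_end) / 2"
  have t: "0 < t" "t < d" "left_end \<le> m_star - t"
    using d(1) left_end_less_m_star by (auto simp: t_def min_def field_simps)
  have "Hmax_right bcheck ?h = H bcheck ?h m_star" using xR \<open>xR = m_star\<close> by simp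
  also have "\<dots> < H bcheck ?h (m_star - t)" using d t by auto
  also have "\<dots> \<le> Hmax_left bcheck ?h" using H_le_Hmax_left[of "m_star - t"] t by auto
  finally show ?thesis by (simp add: Delta_def)
qed

lemma eventually_Delta_pos: "0 < Delta \<beta>0 h \<Longrightarrow> eventually (\<lambda>\<beta>. 0 < Delta \<beta> h) (at \<beta>0)"
  using isCont_Delta_beta by (auto simp: isCont_def dest: order_tendstoD)

lemma eventually_Delta_neg: "Delta \<beta>0 h < 0 \<Longrightarrow> eventually (\<lambda>\<beta>. Delta \<beta> h < 0) (at \<beta>0)"
  using isCont_Delta_beta by (auto simp: isCont_def dest: order_tendstoD)

lemma tendsto_zero_of_Delta:
  assumes "\<And>e. 0 < e \<Longrightarrow> Delta \<beta>0 (c - e) < 0" "\<And>e. 0 < e \<Longrightarrow> 0 < Delta \<beta>0 (c + e)"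
    and "eventually (\<lambda>\<beta>. Delta \<beta> (\<phi> \<beta>) = 0) F" "F \<le> at \<beta>0"
  shows "(\<phi> \<longlongrightarrow> c) F"
proof (rule order_tendstoI)
  fix a assume "a < c"
  then have "eventually (\<lambda>\<beta>. Delta \<beta> a < 0) F"
    using assms(1)[of "c - a"] by (auto intro: filter_leD[OF assms(4)] eventually_Delta_neg)
  with assms(3) show "eventually (\<lambda>\<beta>. a < \<phi> \<beta>) F"
    by eventually_elim (rule Delta_zero_greater)
next
  fix a assume "c < a"
  then have "eventually (\<lambda>\<beta>. 0 < Delta \<beta> a) F"
    using assms(2)[of "a - c"] by (auto intro: filter_leD[OF assms(4)] eventually_Delta_pos)
  with assms(3) show "eventually (\<lambda>\<beta>. \<phi> \<beta> < a) F"
    by eventually_elim (rule Delta_zero_less)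
qed

end

section \<open>Odd exponents\<close>

locale pspin_odd = pspin +
  assumes odd_p: "odd p"
begin

lemma maximizers_subset: "GM \<beta> h \<subseteq> {left_end..1}"
  using odd_p by (auto simp: left_end_def global_maximizers_def)

lemma Delta_le_linear: "h \<le> 0 \<Longrightarrow> Delta \<beta> h \<le> 2 * \<bar>\<beta>\<bar> + h * (1 + m_star) + ln 2"
proof -
  assume "h \<le> 0"
  have "H \<beta> h (-1) \<le> Hmax_left \<beta> h"
    using H_le_Hmax_left[of "-1" \<beta> h] odd_p m_star_pos by (simp add: left_end_def)
  then have L: "- \<beta> - h - ln 2 \<le> Hmax_left \<beta> h"
    using odd_p by (simp add: Hfun_def Ient_minus Ient_1)
  obtain x where x: "m_star \<le> x" "x \<le> 1" "H \<beta> h x = Hmax_right \<beta> h"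
    using Hmax_right_attained by blast
  have x1: "x \<in> {-1..1}" "\<bar>x\<bar>^p \<le> 1" using x m_star_pos by (auto intro: power_le_one)
  then have "\<beta> * x^p \<le> \<bar>\<beta>\<bar>"
    using abs_ge_self[of "\<beta> * x^p"] mult_left_le[of "\<bar>x\<bar>^p" "\<bar>\<beta>\<bar>"] by (simp add: abs_mult power_abs)
  moreover have "h * x \<le> h * m_star" using \<open>h \<le> 0\<close> x by (simp add: mult_left_mono_neg)
  ultimately have "Hmax_right \<beta> h \<le> \<bar>\<beta>\<bar> + h * m_star"
    using x Ient_nonneg[OF x1(1)] by (simp add: Hfun_def)
  then show ?thesis using L by (simp add: Delta_def algebra_simps)
qed

lemma Delta_has_zero: "\<exists>h. Delta \<beta> h = 0"
proof -
  define h1 where "h1 = (ln 2 + 2 * \<bar>\<beta>\<bar> + 1) / (1 - m_star)"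
  define h0 where "h0 = - ((ln 2 + 2 * \<bar>\<beta>\<bar> + 1) / (1 + m_star))"
  have "0 \<le> ln 2 + 2 * \<bar>\<beta>\<bar> + 1" by simp
  then have h: "h0 \<le> 0" "0 \<le> h1"
    using m_star_pos m_star_less_1 unfolding h0_def h1_def
    by (auto intro: divide_nonneg_pos)
  have "0 \<le> Delta \<beta> h1"
    using Delta_ge_linear[OF h(2), of \<beta>] m_star_less_1 by (simp add: h1_def)
  moreover have "Delta \<beta> h0 \<le> 0"
    using Delta_le_linear[OF h(1), of \<beta>] m_star_pos by (simp add: h0_def)
  ultimately show ?thesis
    using IVT'[of "Delta \<beta>" h0 0 h1] h continuous_on_Delta_h by auto
qed

definition phi_odd :: "real \<Rightarrow> real" where
  "phi_odd \<beta> = (THE h. Delta \<beta> h = 0)"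

lemma Delta_phi_odd: "bcheck < \<beta> \<Longrightarrow> Delta \<beta> (phi_odd \<beta>) = 0"
  and phi_odd_unique: "bcheck < \<beta> \<Longrightarrow> Delta \<beta> h = 0 \<Longrightarrow> h = phi_odd \<beta>"
proof -
  assume "bcheck < \<beta>"
  have unique: "h = h'" if "Delta \<beta> h = 0" "Delta \<beta> h' = 0" for h h'
    using Delta_strict_at_zero[OF \<open>bcheck < \<beta>\<close> maximizers_subset that(1), of h'] that(2)
    by (cases h h' rule: linorder_cases) auto
  obtain h0 where h0: "Delta \<beta> h0 = 0" using Delta_has_zero by blast
  show "Delta \<beta> (phi_odd \<beta>) = 0"
    unfolding phi_odd_def by (rule theI[of _ h0]) (use h0 unique in auto)
  with unique show "Delta \<beta> h = 0 \<Longrightarrow> h = phi_odd \<beta>" by blast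
qed

lemma Cplus_odd: "Cplus p = {(\<beta>, h). bcheck < \<beta> \<and> h = phi_odd \<beta>}"
proof safe
  fix \<beta> h assume "(\<beta>, h) \<in> Cplus p"
  then have "0 \<le> \<beta>" and two: "card (GM \<beta> h) = 2" by (auto simp: Cplus_def)
  show "bcheck < \<beta>"
  proof (rule ccontr)
    assume "\<not> bcheck < \<beta>"
    obtain x y where "GM \<beta> h = {x, y}" "x \<noteq> y" using two by (auto simp: card_2_iff)
    then show False
      using maximizers_unique_subcritical[OF \<open>0 \<le> \<beta>\<close>, of x h y] \<open>\<not> bcheck < \<beta>\<close>
        maximizers_subset[of \<beta> h] by auto
  qed
  then show "h = phi_odd \<beta>"
    using card_maximizers_eq_2_iff[OF _ maximizers_subset] two phi_odd_unique by auto
next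
  fix \<beta> assume "bcheck < \<beta>"
  then show "(\<beta>, phi_odd \<beta>) \<in> Cplus p"
    using card_maximizers_eq_2_iff[OF _ maximizers_subset] Delta_phi_odd bcheck_pos
    by (auto simp: Cplus_def)
qed

lemma phi_odd_strict_decreasing: "bcheck < \<beta>1 \<Longrightarrow> \<beta>1 < \<beta>2 \<Longrightarrow> phi_odd \<beta>2 < phi_odd \<beta>1"
  using Delta_pos_of_beta_less[OF _ _ maximizers_subset Delta_phi_odd] Delta_zero_less Delta_phi_odd
  by (meson less_trans)

lemma continuous_on_phi_odd: "continuous_on {bcheck<..} phi_odd"
  unfolding continuous_on_def
proof
  fix \<beta>0 :: real assume "\<beta>0 \<in> {bcheck<..}"
  then have \<beta>0: "bcheck < \<beta>0" by simp
  show "(phi_odd \<longlongrightarrow> phi_odd \<beta>0) (at \<beta>0 within {bcheck<..})"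
  proof (rule tendsto_zero_of_Delta)
    show "Delta \<beta>0 (phi_odd \<beta>0 - e) < 0" "0 < Delta \<beta>0 (phi_odd \<beta>0 + e)" if "0 < e" for e
      using Delta_strict_at_zero[OF \<beta>0 maximizers_subset Delta_phi_odd[OF \<beta>0]] that by auto
    show "eventually (\<lambda>\<beta>. Delta \<beta> (phi_odd \<beta>) = 0) (at \<beta>0 within {bcheck<..})"
      unfolding eventually_at_filter by (auto intro!: always_eventually Delta_phi_odd)
  qed (rule at_le, simp)
qed

lemma phi_odd_btilde: "phi_odd btilde = 0"
  using phi_odd_unique[OF bcheck_less_btilde Delta_btilde_0] by simp

lemma phi_odd_at_top: "filterlim phi_odd at_bot at_top"
  unfolding filterlim_at_bot
proof
  fix M :: real
  have "m_star^p < 1" using m_star_pos m_star_less_1 p_ge_3 by (simp add: power_less_one_iff)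
  define B where "B = max (bcheck + 1) ((\<bar>M\<bar> - M + ln 2 + 1) / (1 - m_star^p))"
  show "eventually (\<lambda>\<beta>. phi_odd \<beta> \<le> M) at_top"
    unfolding eventually_at_top_linorder
  proof (intro exI[of _ B] allI impI)
    fix \<beta> assume "B \<le> \<beta>"
    then have \<beta>: "bcheck < \<beta>" "\<bar>M\<bar> - M + ln 2 + 1 \<le> \<beta> * (1 - m_star^p)"
      using \<open>m_star^p < 1\<close> by (auto simp: B_def field_simps)
    then have "0 < Delta \<beta> M" using Delta_ge_beta[of \<beta> M] bcheck_pos by simp
    then show "phi_odd \<beta> \<le> M" using Delta_zero_less[OF Delta_phi_odd[OF \<beta>(1)]] by force
  qed
qed

lemma phi_odd_tendsto_bcheck: "(phi_odd \<longlongrightarrow> h_star) (at_right bcheck)"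
proof (rule tendsto_zero_of_Delta)
  show "eventually (\<lambda>\<beta>. Delta \<beta> (phi_odd \<beta>) = 0) (at_right bcheck)"
    unfolding eventually_at_filter by (auto intro!: always_eventually Delta_phi_odd)
qed (use Delta_bcheck_below Delta_bcheck_above in \<open>auto intro: at_le\<close>)

theorem Cplus_classification:
  "\<exists>\<phi> :: real \<Rightarrow> real.
     continuous_on {bcheck<..} \<phi> \<and>
     (\<forall>\<beta>1 \<beta>2. bcheck < \<beta>1 \<and> \<beta>1 < \<beta>2 \<longrightarrow> \<phi> \<beta>2 < \<phi> \<beta>1) \<and>
     \<phi> btilde = 0 \<and>
     filterlim \<phi> at_bot at_top \<and>
     Cplus p = {(\<beta>, h). \<beta> > bcheck \<and> h = \<phi> \<beta>} \<and>
     (\<phi> \<longlongrightarrow> h_star) (at_right bcheck)"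
  using continuous_on_phi_odd phi_odd_strict_decreasing phi_odd_btilde phi_odd_at_top
    Cplus_odd phi_odd_tendsto_bcheck
  by (intro exI[of _ phi_odd]) blast

end

section \<open>Even exponents\<close>

locale pspin_even = pspin +
  assumes even_p: "even p"
begin

lemma H_minus: "H \<beta> h (-x) = H \<beta> (-h) x"
  using even_p by (simp add: Hfun_minus)

lemma maximizer_minus_iff: "-x \<in> GM \<beta> (-h) \<longleftrightarrow> x \<in> GM \<beta> h"
proof -
  have "(\<forall>y\<in>{-1..1}. H \<beta> (-h) y \<le> c) \<longleftrightarrow> (\<forall>y\<in>{-1..1}. H \<beta> h y \<le> c)" for c
    using H_minus[of \<beta> h] by (metis atLeastAtMost_iff minus_minus neg_le_iff_le)
  then show ?thesis by (auto simp: global_maximizers_def H_minus)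
qed

lemma maximizers_minus: "GM \<beta> (-h) = uminus ` GM \<beta> h"
proof safe
  fix x assume "x \<in> GM \<beta> (-h)"
  then have "-x \<in> GM \<beta> h" using maximizer_minus_iff[of "-x" \<beta> h] by simp
  then show "x \<in> uminus ` GM \<beta> h" by (rule image_eqI[rotated]) simp
qed (simp add: maximizer_minus_iff)

lemma card_maximizers_minus: "card (GM \<beta> (-h)) = card (GM \<beta> h)"
  by (simp add: maximizers_minus card_image)

lemma power_pos: "x \<noteq> 0 \<Longrightarrow> 0 < (x::real)^p"
  using power_even_abs[OF even_p, of x] zero_less_power[of "\<bar>x\<bar>" p] by simp

lemma maximizer_pos:
  assumes "0 < h" "x \<in> GM \<beta> h"
  shows "0 < x"
proof (rule ccontr)
  assume "\<not> 0 < x"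
  have x: "x \<in> {-1..1}" "H \<beta> h x = Hmax \<beta> h" using assms(2) by (auto simp: global_maximizers_iff)
  show False
  proof (cases "x = 0")
    case True
    then show False using global_maximizer_dH[OF assms(2)] assms(1) p_ge_3 by (simp add: dH_def power_0_left)
  next
    case False
    then have "H \<beta> h x < H \<beta> h (-x)"
      using \<open>\<not> 0 < x\<close> assms(1) H_minus[of \<beta> h x] Hfun_shift[of \<beta> h p x \<beta> "-h"]
      by (simp add: mult_pos_neg)
    then show False using H_le_Hmax[of "-x" \<beta> h] x by auto
  qed
qed

lemma maximizers_subset: "0 < h \<Longrightarrow> GM \<beta> h \<subseteq> {left_end..1}"
proof
  fix x assume "0 < h" "x \<in> GM \<beta> h"
  then show "x \<in> {left_end..1}"
    using maximizer_pos[of h x \<beta>] global_maximizer_interior[of x \<beta> h p] even_p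
    by (simp add: left_end_def)
qed

lemma zero_field_below_btilde:
  assumes "0 \<le> \<beta>" "\<beta> < btilde"
  shows "GM \<beta> 0 = {0}" and "Delta \<beta> 0 < 0"
proof -
  define \<beta>' where "\<beta>' = (\<beta> + btilde) / 2"
  have \<beta>': "0 \<le> \<beta>'" "\<beta> < \<beta>'" "\<beta>' \<le> btilde" using assms by (auto simp: \<beta>'_def)
  have zero: "Hmax \<beta> 0 = 0" "Hmax \<beta>' 0 = 0"
    using Hmax_eq_0_iff[OF assms(1)] Hmax_eq_0_iff[OF \<beta>'(1)] assms \<beta>' by simp_all
  have "z = 0" if "z \<in> GM \<beta> 0" for z
  proof (rule ccontr)
    assume "z \<noteq> 0"
    have z: "z \<in> {-1..1}" "H \<beta> 0 z = 0"
      using that zero(1) by (auto simp: global_maximizers_iff)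
    have "0 < (\<beta>' - \<beta>) * z^p" using power_pos[OF \<open>z \<noteq> 0\<close>] \<beta>' by simp
    then have "0 < H \<beta>' 0 z" using Hfun_shift[of \<beta>' 0 p z \<beta> 0] z(2) by simp
    with H_le_Hmax[OF z(1), of \<beta>' 0] zero(2) show False by simp
  qed
  moreover have "0 \<in> GM \<beta> 0" using zero(1) H_0 by (simp add: global_maximizers_iff)
  ultimately show GM: "GM \<beta> 0 = {0}" by blast
  have "left_end = 0" using even_p by (simp add: left_end_def)
  then have "Hmax_left \<beta> 0 = 0"
    using H_le_Hmax_left[of 0 \<beta> 0] Hmax_left_le[of \<beta> 0] zero(1) H_0 m_star_pos by simp
  moreover obtain y where y: "m_star \<le> y" "y \<le> 1" "H \<beta> 0 y = Hmax_right \<beta> 0"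
    using Hmax_right_attained by blast
  have "Hmax_right \<beta> 0 \<noteq> 0"
  proof
    assume "Hmax_right \<beta> 0 = 0"
    then have "y \<in> GM \<beta> 0" using y m_star_pos zero(1) by (simp add: global_maximizers_iff)
    then show False using GM y m_star_pos by simp
  qed
  ultimately show "Delta \<beta> 0 < 0"
    using Hmax_right_le[of \<beta> 0] zero(1) by (simp add: Delta_def)
qed

lemma maximizer_abs: "x \<in> GM \<beta> 0 \<Longrightarrow> \<bar>x\<bar> \<in> GM \<beta> 0"
  using maximizer_minus_iff[of x \<beta> 0] by (cases "0 \<le> x") auto

lemma maximizers_above_btilde:
  assumes "btilde < \<beta>"
  shows "\<exists>y. m_star < y \<and> GM \<beta> 0 = {y, -y}"
proof -
  have "0 \<le> \<beta>" using assms btilde_nonneg by simp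
  have abs_gt: "m_star < \<bar>x\<bar>" if "x \<in> GM \<beta> 0" for x
  proof -
    have "x \<noteq> 0" using that Hmax_pos[OF assms] H_0 by (auto simp: global_maximizers_iff)
    then show ?thesis using positive_maximizer_gt_m_star[OF \<open>0 \<le> \<beta>\<close> maximizer_abs[OF that]] by simp
  qed
  obtain g where "g \<in> GM \<beta> 0" using global_maximizers_nonempty by blast
  then have y: "\<bar>g\<bar> \<in> GM \<beta> 0" "m_star < \<bar>g\<bar>" using maximizer_abs abs_gt by auto
  have "GM \<beta> 0 = {\<bar>g\<bar>, -\<bar>g\<bar>}"
  proof safe
    fix w assume w: "w \<in> GM \<beta> 0" "w \<noteq> \<bar>g\<bar>"
    have "\<bar>w\<bar> = \<bar>g\<bar>"
      using maximizers_unique_right[OF \<open>0 \<le> \<beta>\<close> maximizer_abs[OF w(1)] y(1)] abs_gt[OF w(1)] y by auto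
    then show "w = - \<bar>g\<bar>" using w by auto
  next
    show "-\<bar>g\<bar> \<in> GM \<beta> 0" using y maximizer_minus_iff[of "-\<bar>g\<bar>" \<beta> 0] by simp
  qed (use y in simp)
  with y show ?thesis by blast
qed

lemma zero_field_above_btilde:
  assumes "btilde < \<beta>"
  shows "card (GM \<beta> 0) = 2" and "0 < Delta \<beta> 0"
proof -
  obtain y where y: "m_star < y" "GM \<beta> 0 = {y, -y}" using maximizers_above_btilde[OF assms] by blast
  then show "card (GM \<beta> 0) = 2" using m_star_pos by simp
  have "y \<in> GM \<beta> 0" using y by simp
  then have "H \<beta> 0 y = Hmax \<beta> 0" "y < 1"
    using global_maximizer_interior by (auto simp: global_maximizers_iff)
  then have "Hmax_right \<beta> 0 = Hmax \<beta> 0"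
    using H_le_Hmax_right[of y \<beta> 0] Hmax_right_le[of \<beta> 0] y by simp
  moreover obtain z where z: "left_end \<le> z" "z \<le> m_star" "H \<beta> 0 z = Hmax_left \<beta> 0"
    using Hmax_left_attained by blast
  have "Hmax_left \<beta> 0 \<noteq> Hmax \<beta> 0"
  proof
    assume "Hmax_left \<beta> 0 = Hmax \<beta> 0"
    then have "z \<in> GM \<beta> 0" using z left_end_ge m_star_less_1 by (auto simp: global_maximizers_iff)
    then show False using y z m_star_pos even_p by (auto simp: left_end_def)
  qed
  ultimately show "0 < Delta \<beta> 0" using Hmax_left_le[of \<beta> 0] by (simp add: Delta_def)
qed

lemma zero_field_at_btilde:
  shows "card (GM btilde 0) \<noteq> 2" and "0 < h \<Longrightarrow> 0 < Delta btilde h"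
proof -
  obtain y where y: "y \<in> GM btilde 0" "m_star < y" using positive_maximizer_btilde by blast
  have "{0, y, -y} \<subseteq> GM btilde 0"
    using y maximizer_btilde_0 maximizer_minus_iff[of "-y" btilde 0] by auto
  moreover have "card {0, y, -y} = 3" using y m_star_pos by simp
  ultimately show "card (GM btilde 0) \<noteq> 2"
    using card_mono[of "GM btilde 0" "{0, y, -y}"] card.infinite[of "GM btilde 0"] by fastforce
  assume "0 < h"
  have "Hmax_right btilde 0 = H btilde 0 y"
    using H_le_Hmax_right[of y btilde 0] Hmax_right_le[of btilde 0] y global_maximizer_interior[of y]
    by (auto simp: global_maximizers_iff)
  moreover obtain xL where xL: "left_end \<le> xL" "xL \<le> m_star" "H btilde h xL = Hmax_left btilde h"
    using Hmax_left_attained by blast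
  ultimately have "(h - 0) * (y - xL) \<le> Delta btilde h - Delta btilde 0"
    using y global_maximizer_interior[OF y(1)] by (intro Delta_diff_ge_h) auto
  moreover have "0 < (h - 0) * (y - xL)" using \<open>0 < h\<close> xL y by simp
  ultimately show "0 < Delta btilde h" using Delta_btilde_0 by simp
qed

lemma Delta_has_pos_zero:
  assumes "0 \<le> \<beta>" "\<beta> < btilde"
  shows "\<exists>h>0. Delta \<beta> h = 0"
proof -
  define h1 where "h1 = (ln 2 + 2 * \<bar>\<beta>\<bar> + 1) / (1 - m_star)"
  have "0 \<le> ln 2 + 2 * \<bar>\<beta>\<bar> + 1" by simp
  then have "0 \<le> h1" using m_star_less_1 unfolding h1_def by (auto intro: divide_nonneg_pos)
  then have "0 \<le> Delta \<beta> h1"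
    using Delta_ge_linear[of h1 \<beta>] m_star_less_1 by (simp add: h1_def)
  then obtain h where "0 \<le> h" "Delta \<beta> h = 0"
    using IVT'[of "Delta \<beta>" 0 0 h1] zero_field_below_btilde(2)[OF assms] \<open>0 \<le> h1\<close> continuous_on_Delta_h
    by fastforce
  moreover have "h \<noteq> 0" using zero_field_below_btilde(2)[OF assms] \<open>Delta \<beta> h = 0\<close> by auto
  ultimately show ?thesis by (intro exI[of _ h]) simp
qed

text \<open>Beyond \<^term>\<open>beta_tilde p\<close> the two maximizers at \<open>h = 0\<close> are \<open>\<plusminus>y\<close>, so \<open>\<phi>\<^sub>p\<close> vanishes there.\<close>
definition phi_even :: "real \<Rightarrow> real" where
  "phi_even \<beta> = (if \<beta> < btilde then (THE h. 0 < h \<and> Delta \<beta> h = 0) else 0)"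

lemma Delta_pos_zero_unique:
  assumes "bcheck < \<beta>" "0 < h" "Delta \<beta> h = 0" "Delta \<beta> h' = 0"
  shows "h = h'"
  using Delta_strict_at_zero[OF assms(1) maximizers_subset[OF assms(2)] assms(3), of h'] assms(4)
  by (cases h h' rule: linorder_cases) auto

lemma phi_even_pos: "bcheck < \<beta> \<Longrightarrow> \<beta> < btilde \<Longrightarrow> 0 < phi_even \<beta>"
  and Delta_phi_even: "bcheck < \<beta> \<Longrightarrow> \<beta> < btilde \<Longrightarrow> Delta \<beta> (phi_even \<beta>) = 0"
proof -
  assume "bcheck < \<beta>" "\<beta> < btilde"
  moreover have "0 \<le> \<beta>" using \<open>bcheck < \<beta>\<close> bcheck_pos by simp
  ultimately obtain h0 where h0: "0 < h0" "Delta \<beta> h0 = 0"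
    using Delta_has_pos_zero by blast
  have "0 < (THE h. 0 < h \<and> Delta \<beta> h = 0) \<and> Delta \<beta> (THE h. 0 < h \<and> Delta \<beta> h = 0) = 0"
    by (rule theI[of _ h0]) (use h0 Delta_pos_zero_unique[OF \<open>bcheck < \<beta>\<close>] in auto)
  then show "0 < phi_even \<beta>" "Delta \<beta> (phi_even \<beta>) = 0"
    using \<open>\<beta> < btilde\<close> by (auto simp: phi_even_def)
qed

lemma phi_even_unique:
  assumes "bcheck < \<beta>" "0 < h" "Delta \<beta> h = 0"
  shows "h = phi_even \<beta>"
proof -
  have "\<beta> < btilde"
  proof (rule ccontr)
    assume "\<not> \<beta> < btilde"
    then have "0 < Delta \<beta> 0 \<or> \<beta> = btilde" using zero_field_above_btilde(2)[of \<beta>] by force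
    then show False using zero_field_at_btilde(2)[OF assms(2)] Delta_mono[of 0 h \<beta>] assms by auto
  qed
  then show ?thesis
    using Delta_pos_zero_unique[OF assms] Delta_phi_even assms(1) by blast
qed

lemma phi_even_eq_0: "btilde \<le> \<beta> \<Longrightarrow> phi_even \<beta> = 0"
  by (simp add: phi_even_def)

lemma card_maximizers_nonzero_iff:
  assumes "0 \<le> \<beta>" "h \<noteq> 0"
  shows "card (GM \<beta> h) = 2 \<longleftrightarrow> bcheck < \<beta> \<and> \<beta> < btilde \<and> \<bar>h\<bar> = phi_even \<beta>"
proof -
  have "card (GM \<beta> \<bar>h\<bar>) = card (GM \<beta> h)"
    using card_maximizers_minus[of \<beta> h] by (cases "0 \<le> h") auto
  moreover have "0 < \<bar>h\<bar>" using assms by simp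
  moreover have "card (GM \<beta> k) = 2 \<longleftrightarrow> bcheck < \<beta> \<and> \<beta> < btilde \<and> k = phi_even \<beta>" if "0 < k" for k
  proof
    assume two: "card (GM \<beta> k) = 2"
    have "bcheck < \<beta>"
    proof (rule ccontr)
      assume "\<not> bcheck < \<beta>"
      obtain x y where "GM \<beta> k = {x, y}" "x \<noteq> y" using two by (auto simp: card_2_iff)
      then show False
        using maximizers_unique_subcritical[OF assms(1), of x k y] \<open>\<not> bcheck < \<beta>\<close>
          maximizers_subset[OF that, of \<beta>] by auto
    qed
    moreover have "Delta \<beta> k = 0"
      using card_maximizers_eq_2_iff[OF \<open>bcheck < \<beta>\<close> maximizers_subset[OF that]] two by simp
    ultimately show "bcheck < \<beta> \<and> \<beta> < btilde \<and> k = phi_even \<beta>"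
      using phi_even_unique[OF _ that] phi_even_eq_0[of \<beta>] that by force
  next
    assume "bcheck < \<beta> \<and> \<beta> < btilde \<and> k = phi_even \<beta>"
    then show "card (GM \<beta> k) = 2"
      using card_maximizers_eq_2_iff[OF _ maximizers_subset[OF that]] Delta_phi_even by auto
  qed
  ultimately show ?thesis by metis
qed

lemma card_maximizers_0_iff: "0 \<le> \<beta> \<Longrightarrow> card (GM \<beta> 0) = 2 \<longleftrightarrow> btilde < \<beta>"
  using zero_field_below_btilde(1)[of \<beta>] zero_field_above_btilde(1)[of \<beta>] zero_field_at_btilde(1) by (cases \<beta> btilde rule: linorder_cases) auto

lemma Cplus_even:
  "Cplus p = {(\<beta>, h). bcheck < \<beta> \<and> \<beta> \<noteq> btilde \<and> (h = phi_even \<beta> \<or> h = - phi_even \<beta>)}"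
proof -
  have "(\<beta>, h) \<in> Cplus p \<longleftrightarrow> bcheck < \<beta> \<and> \<beta> \<noteq> btilde \<and> (h = phi_even \<beta> \<or> h = - phi_even \<beta>)"
    for \<beta> h
  proof (cases "0 \<le> \<beta>")
    case True
    then show ?thesis
      using card_maximizers_0_iff[OF True] card_maximizers_nonzero_iff[OF True, of h]
        phi_even_pos[of \<beta>] phi_even_eq_0[of \<beta>] bcheck_less_btilde
      by (cases "h = 0") (auto simp: Cplus_def abs_if)
  qed (use bcheck_pos in \<open>auto simp: Cplus_def\<close>)
  then show ?thesis by auto
qed

lemma phi_even_nonneg: "bcheck < \<beta> \<Longrightarrow> 0 \<le> phi_even \<beta>"
  using phi_even_pos[of \<beta>] phi_even_eq_0[of \<beta>] by force

lemma phi_even_strict_decreasing: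
  assumes "bcheck < \<beta>1" "\<beta>1 < \<beta>2" "\<beta>2 < btilde"
  shows "phi_even \<beta>2 < phi_even \<beta>1"
proof -
  have "0 < Delta \<beta>2 (phi_even \<beta>1)"
    using assms phi_even_pos[of \<beta>1]
    by (intro Delta_pos_of_beta_less[OF assms(1,2) maximizers_subset Delta_phi_even]) auto
  then show ?thesis using Delta_zero_less[OF Delta_phi_even] assms by auto
qed

lemma phi_even_tendsto_btilde: "(phi_even \<longlongrightarrow> 0) (at btilde within {bcheck<..})"
proof (rule order_tendstoI)
  fix a :: real assume "a < 0"
  then show "eventually (\<lambda>\<beta>. a < phi_even \<beta>) (at btilde within {bcheck<..})"
    using phi_even_nonneg
    by (auto simp: eventually_at_filter intro!: always_eventually intro: less_le_trans)
next
  fix a :: real assume "0 < a"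
  then have "eventually (\<lambda>\<beta>. 0 < Delta \<beta> a) (at btilde within {bcheck<..})"
    using zero_field_at_btilde(2) by (auto intro: filter_leD[OF at_le[OF subset_UNIV]] eventually_Delta_pos)
  moreover have "eventually (\<lambda>\<beta>. bcheck < \<beta>) (at btilde within {bcheck<..})"
    by (auto simp: eventually_at_filter)
  ultimately show "eventually (\<lambda>\<beta>. phi_even \<beta> < a) (at btilde within {bcheck<..})"
  proof eventually_elim
    case (elim \<beta>)
    then show ?case
      using Delta_zero_less[OF Delta_phi_even] phi_even_eq_0 \<open>0 < a\<close> by (cases "\<beta> < btilde") auto
  qed
qed

lemma tendsto_phi_even:
  assumes "bcheck < \<beta>0"
  shows "(phi_even \<longlongrightarrow> phi_even \<beta>0) (at \<beta>0 within {bcheck<..})"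
proof (cases \<beta>0 btilde rule: linorder_cases)
  case less
  show ?thesis
  proof (rule tendsto_zero_of_Delta)
    have "0 < phi_even \<beta>0" "Delta \<beta>0 (phi_even \<beta>0) = 0"
      using phi_even_pos Delta_phi_even assms less by auto
    then show "Delta \<beta>0 (phi_even \<beta>0 - e) < 0" "0 < Delta \<beta>0 (phi_even \<beta>0 + e)" if "0 < e" for e
      using Delta_strict_at_zero[OF assms maximizers_subset] that by auto
    have "eventually (\<lambda>\<beta>. \<beta> < btilde) (at \<beta>0 within {bcheck<..})"
      using less by (intro order_tendstoD(2)[OF tendsto_ident_at])
    moreover have "eventually (\<lambda>\<beta>. bcheck < \<beta>) (at \<beta>0 within {bcheck<..})"
      by (auto simp: eventually_at_filter)
    ultimately show "eventually (\<lambda>\<beta>. Delta \<beta> (phi_even \<beta>) = 0) (at \<beta>0 within {bcheck<..})"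
      by eventually_elim (rule Delta_phi_even)
  qed (rule at_le, simp)
next
  case equal
  then show ?thesis using phi_even_tendsto_btilde phi_even_eq_0 by simp
next
  case greater
  have "eventually (\<lambda>\<beta>. btilde < \<beta>) (at \<beta>0 within {bcheck<..})"
    using greater by (intro order_tendstoD(1)[OF tendsto_ident_at])
  then have "eventually (\<lambda>\<beta>. phi_even \<beta> = phi_even \<beta>0) (at \<beta>0 within {bcheck<..})"
    by eventually_elim (use greater phi_even_eq_0 in auto)
  then show ?thesis by (rule tendsto_eventually)
qed

lemma continuous_on_phi_even: "continuous_on {bcheck<..} phi_even"
  unfolding continuous_on_def using tendsto_phi_even by simp

lemma phi_even_tendsto_bcheck: "(phi_even \<longlongrightarrow> h_star) (at_right bcheck)"
proof (rule tendsto_zero_of_Delta)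
  have "eventually (\<lambda>\<beta>. \<beta> < btilde) (at_right bcheck)"
    using bcheck_less_btilde by (intro order_tendstoD(2)[OF tendsto_ident_at])
  moreover have "eventually (\<lambda>\<beta>. bcheck < \<beta>) (at_right bcheck)"
    by (auto simp: eventually_at_filter)
  ultimately show "eventually (\<lambda>\<beta>. Delta \<beta> (phi_even \<beta>) = 0) (at_right bcheck)"
    by eventually_elim (rule Delta_phi_even)
qed (use Delta_bcheck_below Delta_bcheck_above in \<open>auto intro: at_le\<close>)

theorem Cplus_classification:
  "\<exists>\<phi> :: real \<Rightarrow> real.
     continuous_on {bcheck<..} \<phi> \<and>
     (\<forall>\<beta> > bcheck. \<phi> \<beta> \<ge> 0) \<and>
     (\<forall>\<beta>1 \<beta>2. bcheck < \<beta>1 \<and> \<beta>1 < \<beta>2 \<and> \<beta>2 < btilde \<longrightarrow> \<phi> \<beta>2 < \<phi> \<beta>1) \<and>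
     (\<forall>\<beta> \<ge> btilde. \<phi> \<beta> = 0) \<and>
     Cplus p = {(\<beta>, h). \<beta> > bcheck \<and> \<beta> \<noteq> btilde \<and> (h = \<phi> \<beta> \<or> h = - \<phi> \<beta>)} \<and>
     (\<phi> \<longlongrightarrow> h_star) (at_right bcheck)"
  using continuous_on_phi_even phi_even_nonneg phi_even_strict_decreasing phi_even_eq_0
    Cplus_even phi_even_tendsto_bcheck
  by (intro exI[of _ phi_even]) blast

end

theorem mainTheorem11:
  fixes p :: nat
  assumes "p \<ge> 3"
  shows "beta_check p < beta_tilde p \<and>
    (even p \<longrightarrow>
      (\<exists>\<phi> :: real \<Rightarrow> real.
         continuous_on {beta_check p<..} \<phi> \<and>
         (\<forall>\<beta> > beta_check p. \<phi> \<beta> \<ge> 0) \<and>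
         (\<forall>\<beta>1 \<beta>2. beta_check p < \<beta>1 \<and> \<beta>1 < \<beta>2 \<and> \<beta>2 < beta_tilde p \<longrightarrow> \<phi> \<beta>2 < \<phi> \<beta>1) \<and>
         (\<forall>\<beta> \<ge> beta_tilde p. \<phi> \<beta> = 0) \<and>
         Cplus p = {(\<beta>, h). \<beta> > beta_check p \<and> \<beta> \<noteq> beta_tilde p \<and> (h = \<phi> \<beta> \<or> h = - \<phi> \<beta>)} \<and>
         (\<phi> \<longlongrightarrow> artanh (sqrt ((real p - 2) / real p))
               - real p * beta_check p * sqrt ((real p - 2) / real p) ^ (p - 1)) (at_right (beta_check p)))) \<and>
    (odd p \<longrightarrow>
      (\<exists>\<phi> :: real \<Rightarrow> real.
         continuous_on {beta_check p<..} \<phi> \<and>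
         (\<forall>\<beta>1 \<beta>2. beta_check p < \<beta>1 \<and> \<beta>1 < \<beta>2 \<longrightarrow> \<phi> \<beta>2 < \<phi> \<beta>1) \<and>
         \<phi> (beta_tilde p) = 0 \<and>
         filterlim \<phi> at_bot at_top \<and>
         Cplus p = {(\<beta>, h). \<beta> > beta_check p \<and> h = \<phi> \<beta>} \<and>
         (\<phi> \<longlongrightarrow> artanh (sqrt ((real p - 2) / real p))
               - real p * beta_check p * sqrt ((real p - 2) / real p) ^ (p - 1)) (at_right (beta_check p))))"
proof -
  interpret pspin p using assms by unfold_locales
  have "artanh (sqrt ((real p - 2) / real p))
      - real p * beta_check p * sqrt ((real p - 2) / real p) ^ (p - 1) = h_star"
    by (simp add: h_star_def m_star_def)
  moreover have "even p \<Longrightarrow> pspin_even p" "odd p \<Longrightarrow> pspin_odd p"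
    by (simp_all add: pspin_even_def pspin_even_axioms_def pspin_odd_def pspin_odd_axioms_def
        pspin_axioms)
  ultimately show ?thesis
    using bcheck_less_btilde pspin_even.Cplus_classification pspin_odd.Cplus_classification by auto
qed

end
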